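(* Let $G$ be a finite solvable group with $G\in\mathcal{D}_n$ for some integer $n\ge 3$. Then the derived length of $G$ is at most $n-1$.
   Context: $\mathcal{D}(G)$ denotes the number of conjugacy classes of nontrivial subgroups $H$ of the finite group $G$ with $N_G(H)\neq H$; $\mathcal{D}_n$ is the family of finite groups $G$ with $\mathcal{D}(G)=n$. *)

theory Defs
  imports "HOL-Algebra.Group_Action" "HOL-Algebra.Solvable_Groups"
begin

definition subgroup_conj_class :: "('a, 'b) monoid_scheme \<Rightarrow> 'a set \<Rightarrow> 'a set set" where
  "subgroup_conj_class G H = {g <#\<^bsub>G\<^esub> H #>\<^bsub>G\<^esub> inv\<^bsub>G\<^esub> g | g. g \<in> carrier G}"

definition D_count :: "('a, 'b) monoid_scheme \<Rightarrow> nat" where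
  "D_count G = card {subgroup_conj_class G H | H.
       subgroup H G \<and> H \<noteq> {\<one>\<^bsub>G\<^esub>} \<and> normalizer G H \<noteq> H}"

definition derived_length :: "('a, 'b) monoid_scheme \<Rightarrow> nat" where
  "derived_length G = (LEAST n. (derived G ^^ n) (carrier G) = {\<one>\<^bsub>G\<^esub>})"

end

theory Submission
  imports Defs "HOL-Algebra.Multiplicative_Group" "HOL-Algebra.SndIsomorphismGrp"
    "HOL-Computational_Algebra.Primes"
begin

text \<open>Let \<open>d\<close> be the derived length. The terms \<open>G\<^sup>(\<^sup>i\<^sup>)\<close>, \<open>1 \<le> i < d\<close>, of the derived series are
  nontrivial proper normal subgroups, so each is non-self-normalizing and forms a conjugacy class
  of its own: they account for \<open>d - 1\<close> of the classes counted by \<open>D(G)\<close>. For \<open>d \<ge> 3\<close> two more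
  classes are found among subgroups built from \<open>M = G\<^sup>(\<^sup>d\<^sup>-\<^sup>1\<^sup>)\<close> (abelian), \<open>L = G\<^sup>(\<^sup>d\<^sup>-\<^sup>2\<^sup>)\<close>
  (with \<open>L' = M\<close>) and \<open>K = G\<^sup>(\<^sup>d\<^sup>-\<^sup>3\<^sup>)\<close> (with \<open>K' = L\<close>): proper subgroups of \<open>M\<close> are normalized
  by \<open>M\<close>, subgroups strictly between \<open>M\<close> and \<open>L\<close> (or between \<open>L\<close> and \<open>K\<close>) are normal in \<open>L\<close>
  (or \<open>K\<close>), and cyclic subgroups are normalized by their centralizers. If \<open>L/M\<close> is cyclic, a
  Frattini argument shows that \<open>N(\<langle>a\<rangle>) \<not>\<subseteq> L\<close> for a generator \<open>a\<close>; if \<open>M\<close> is cyclic, then \<open>L\<close>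
  centralizes \<open>M\<close>, and the hardest case, where \<open>M\<close> has prime order and lies in every nontrivial
  cyclic subgroup of \<open>L\<close>, is settled by computing \<open>p\<close>-th powers. Hence \<open>D(G) \<ge> d + 1\<close>.\<close>

section \<open>Conjugacy classes of subgroups\<close>

definition D_subgroup :: "('a, 'b) monoid_scheme \<Rightarrow> 'a set \<Rightarrow> bool" where
  "D_subgroup G H \<longleftrightarrow> subgroup H G \<and> H \<noteq> {\<one>\<^bsub>G\<^esub>} \<and> normalizer G H \<noteq> H"

context group begin

lemma mult_inv_cancel_left [simp]: "x \<in> carrier G \<Longrightarrow> y \<in> carrier G \<Longrightarrow> x \<otimes> (inv x \<otimes> y) = y"
  by (simp add: m_assoc[symmetric])

lemma inv_mult_cancel_left [simp]: "x \<in> carrier G \<Longrightarrow> y \<in> carrier G \<Longrightarrow> inv x \<otimes> (x \<otimes> y) = y"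
  by (simp add: m_assoc[symmetric])

lemma conjugate_eq_image:
  assumes "x \<in> carrier G" "H \<subseteq> carrier G"
  shows "x <# H #> inv x = (\<lambda>h. x \<otimes> h \<otimes> inv x) ` H"
  using assms unfolding l_coset_def r_coset_def by auto

lemma mem_normalizer_iff:
  assumes "H \<subseteq> carrier G"
  shows "x \<in> normalizer G H \<longleftrightarrow> x \<in> carrier G \<and> x <# H #> inv x = H"
  using assms unfolding normalizer_def stabilizer_def by auto

lemma mem_normalizerI:
  assumes x: "x \<in> carrier G" and H: "H \<subseteq> carrier G"
    and closed: "\<And>h. h \<in> H \<Longrightarrow> x \<otimes> h \<otimes> inv x \<in> H \<and> inv x \<otimes> h \<otimes> x \<in> H"
  shows "x \<in> normalizer G H"
proof -
  have "(\<lambda>h. x \<otimes> h \<otimes> inv x) ` H = H"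
  proof
    show "(\<lambda>h. x \<otimes> h \<otimes> inv x) ` H \<subseteq> H" using closed by auto
    show "H \<subseteq> (\<lambda>h. x \<otimes> h \<otimes> inv x) ` H"
    proof
      fix h assume h: "h \<in> H"
      then have "h = x \<otimes> (inv x \<otimes> h \<otimes> x) \<otimes> inv x"
        using x H by (auto simp: m_assoc subsetD)
      then show "h \<in> (\<lambda>h. x \<otimes> h \<otimes> inv x) ` H" using closed[OF h] by blast
    qed
  qed
  then show ?thesis using mem_normalizer_iff[OF H] conjugate_eq_image[OF x H] x by simp
qed

lemma conj_mem_normalizer:
  assumes "x \<in> normalizer G H" "H \<subseteq> carrier G" "h \<in> H"
  shows "x \<otimes> h \<otimes> inv x \<in> H"
proof -
  have "x \<in> carrier G" "x <# H #> inv x = H" using assms(1,2) mem_normalizer_iff by auto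
  then show ?thesis using assms(2,3) conjugate_eq_image by blast
qed

lemma self_mem_subgroup_conj_class: "H \<subseteq> carrier G \<Longrightarrow> H \<in> subgroup_conj_class G H"
proof -
  assume "H \<subseteq> carrier G"
  then have "H = \<one> <# H #> inv \<one>" by (simp add: lcos_mult_one)
  then show ?thesis unfolding subgroup_conj_class_def by blast
qed

lemma normal_conjugate_eq:
  assumes "N \<lhd> G" "g \<in> carrier G"
  shows "g <# N #> inv g = N"
proof -
  interpret normal N G by fact
  have "g <# N #> inv g = N #> g #> inv g" using coset_eq assms(2) by simp
  also have "\<dots> = N #> (g \<otimes> inv g)" using assms(2) subset by (simp add: coset_mult_assoc)
  finally show ?thesis using assms(2) subset by simp
qed

lemma subgroup_conj_class_normal: "N \<lhd> G \<Longrightarrow> subgroup_conj_class G N = {N}"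
  unfolding subgroup_conj_class_def using normal_conjugate_eq by auto

lemma subgroup_conj_class_eqE:
  assumes "subgroup_conj_class G H1 = subgroup_conj_class G H2" "H1 \<subseteq> carrier G"
  obtains g where "g \<in> carrier G" "H1 = g <# H2 #> inv g"
  using self_mem_subgroup_conj_class[OF assms(2)] assms(1) unfolding subgroup_conj_class_def by auto

lemma subgroup_conj_class_neq_normal_subset:
  assumes "N \<lhd> G" "E1 \<subseteq> N" "\<not> E2 \<subseteq> N" "E2 \<subseteq> carrier G"
  shows "subgroup_conj_class G E1 \<noteq> subgroup_conj_class G E2"
proof
  assume "subgroup_conj_class G E1 = subgroup_conj_class G E2"
  then obtain g where g: "g \<in> carrier G" "E2 = g <# E1 #> inv g"
    using subgroup_conj_class_eqE assms(4) by metis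
  have "E1 \<subseteq> carrier G" using assms(1,2) normal_imp_subgroup subgroup.subset by blast
  then have "E2 \<subseteq> N"
    using g assms(1,2) normal_inv_iff by (auto simp: conjugate_eq_image)
  then show False using assms(3) by simp
qed

lemma subgroup_conj_class_neq_normal_supset:
  assumes "N \<lhd> G" "N \<subseteq> E1" "\<not> N \<subseteq> E2" "E1 \<subseteq> carrier G" "E2 \<subseteq> carrier G"
  shows "subgroup_conj_class G E1 \<noteq> subgroup_conj_class G E2"
proof
  assume "subgroup_conj_class G E1 = subgroup_conj_class G E2"
  then obtain g where g: "g \<in> carrier G" "E2 = g <# E1 #> inv g"
    using subgroup_conj_class_eqE assms(5) by metis
  have "N = g <# N #> inv g" using normal_conjugate_eq assms(1) g(1) by simp
  also have "\<dots> \<subseteq> E2" using g assms(2,4) by (simp add: conjugate_eq_image image_mono)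
  finally show False using assms(3) by simp
qed

lemma subgroup_conj_class_neq_card:
  assumes "card E1 \<noteq> card E2" "E1 \<subseteq> carrier G" "E2 \<subseteq> carrier G"
  shows "subgroup_conj_class G E1 \<noteq> subgroup_conj_class G E2"
proof
  assume "subgroup_conj_class G E1 = subgroup_conj_class G E2"
  then obtain g where g: "g \<in> carrier G" "E2 = g <# E1 #> inv g"
    using subgroup_conj_class_eqE assms(3) by metis
  have "inj_on (\<lambda>h. g \<otimes> h \<otimes> inv g) E1"
  proof (rule inj_onI)
    fix h1 h2 assume "h1 \<in> E1" "h2 \<in> E1" "g \<otimes> h1 \<otimes> inv g = g \<otimes> h2 \<otimes> inv g"
    then show "h1 = h2" using g(1) assms(2) by (simp add: subsetD)
  qed
  then have "card E2 = card E1" using g conjugate_eq_image[OF g(1) assms(2)] card_image by metis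
  then show False using assms(1) by simp
qed

lemma D_subgroupI:
  assumes "subgroup E G" "x \<in> E" "x \<noteq> \<one>" "g \<in> normalizer G E" "g \<notin> E"
  shows "D_subgroup G E"
  using assms unfolding D_subgroup_def by blast

lemma carrier_subset_normalizer_if_normal:
  assumes "N \<lhd> G"
  shows "carrier G \<subseteq> normalizer G N"
proof
  fix g assume g: "g \<in> carrier G"
  have "N \<subseteq> carrier G" using assms normal_imp_subgroup subgroup.subset by blast
  then show "g \<in> normalizer G N" using mem_normalizer_iff normal_conjugate_eq[OF assms g] g by simp
qed

lemma normal_D_subgroup:
  assumes "N \<lhd> G" "N \<noteq> {\<one>}" "N \<noteq> carrier G"
  shows "D_subgroup G N"
proof -
  have "N \<subseteq> carrier G" using assms(1) normal_imp_subgroup subgroup.subset by blast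
  then have "normalizer G N \<noteq> N" using carrier_subset_normalizer_if_normal[OF assms(1)] assms(3) by blast
  then show ?thesis using assms(1,2) normal_imp_subgroup unfolding D_subgroup_def by blast
qed

lemma card_le_D_count:
  assumes fin: "finite (carrier G)" and D: "\<And>E. E \<in> \<E> \<Longrightarrow> D_subgroup G E"
    and inj: "inj_on (subgroup_conj_class G) \<E>"
  shows "card \<E> \<le> D_count G"
proof -
  let ?C = "{subgroup_conj_class G H | H. subgroup H G \<and> H \<noteq> {\<one>} \<and> normalizer G H \<noteq> H}"
  have "subgroup_conj_class G H \<subseteq> Pow (carrier G)" if "subgroup H G" for H
  proof -
    have "g <# H #> inv g \<subseteq> carrier G" if "g \<in> carrier G" for g
      by (intro r_coset_subset_G l_coset_subset_G subgroup.subset) (use that \<open>subgroup H G\<close> in auto)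
    then show ?thesis unfolding subgroup_conj_class_def by blast
  qed
  then have "?C \<subseteq> Pow (Pow (carrier G))" by blast
  then have "finite ?C" by (rule finite_subset) (simp add: fin)
  moreover have "subgroup_conj_class G ` \<E> \<subseteq> ?C"
  proof
    fix X assume "X \<in> subgroup_conj_class G ` \<E>"
    then obtain E where "E \<in> \<E>" "X = subgroup_conj_class G E" by blast
    then show "X \<in> ?C" using D unfolding D_subgroup_def by blast
  qed
  ultimately have "card (subgroup_conj_class G ` \<E>) \<le> card ?C" by (rule card_mono)
  then show ?thesis using card_image[OF inj] unfolding D_count_def by simp
qed

text \<open>A normal subgroup is alone in its conjugacy class.\<close>
lemma card_normal_plus_two_le_D_count:
  assumes fin: "finite (carrier G)" and "finite \<N>"
    and \<N>: "\<And>N. N \<in> \<N> \<Longrightarrow> N \<lhd> G \<and> D_subgroup G N"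
    and E: "D_subgroup G E1" "D_subgroup G E2" "E1 \<notin> \<N>" "E2 \<notin> \<N>"
    and noncon: "subgroup_conj_class G E1 \<noteq> subgroup_conj_class G E2"
  shows "card \<N> + 2 \<le> D_count G"
proof -
  let ?\<E> = "insert E1 (insert E2 \<N>)"
  have carrier: "X \<subseteq> carrier G" if "X \<in> ?\<E>" for X
    using that \<N> E subgroup.subset unfolding D_subgroup_def by blast
  have inj: "inj_on (subgroup_conj_class G) ?\<E>"
  proof (rule inj_onI)
    fix X Y assume X: "X \<in> ?\<E>" and Y: "Y \<in> ?\<E>"
      and eq: "subgroup_conj_class G X = subgroup_conj_class G Y"
    have "X \<in> subgroup_conj_class G Y" "Y \<in> subgroup_conj_class G X"
      using eq self_mem_subgroup_conj_class carrier X Y by auto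
    moreover have "subgroup_conj_class G N = {N}" if "N \<in> \<N>" for N
      using \<N>[OF that] subgroup_conj_class_normal by blast
    ultimately show "X = Y" using X Y eq noncon by blast
  qed
  have "E1 \<noteq> E2" using noncon by auto
  then have "card ?\<E> = card \<N> + 2" using E \<open>finite \<N>\<close> by simp
  moreover have "card ?\<E> \<le> D_count G"
    using card_le_D_count[OF fin _ inj] \<N> E by blast
  ultimately show ?thesis by simp
qed

end

section \<open>Commutators, centralizers and normalizers\<close>

definition centralizer :: "('a, 'b) monoid_scheme \<Rightarrow> 'a set \<Rightarrow> 'a set" where
  "centralizer G S = {z \<in> carrier G. \<forall>s\<in>S. s \<otimes>\<^bsub>G\<^esub> z = z \<otimes>\<^bsub>G\<^esub> s}"

context group begin

lemma commutator_eq_one_iff: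
  assumes "x \<in> carrier G" "y \<in> carrier G"
  shows "x \<otimes> y \<otimes> inv x \<otimes> inv y = \<one> \<longleftrightarrow> x \<otimes> y = y \<otimes> x"
proof -
  have e: "x \<otimes> y \<otimes> inv x \<otimes> inv y \<otimes> (y \<otimes> x) = x \<otimes> y" using assms by (simp add: m_assoc)
  have "x \<otimes> y \<otimes> inv x \<otimes> inv y = \<one> \<longleftrightarrow> x \<otimes> y \<otimes> inv x \<otimes> inv y \<otimes> (y \<otimes> x) = \<one> \<otimes> (y \<otimes> x)"
    using assms by (intro right_cancel[symmetric]) auto
  then show ?thesis using e assms by simp
qed

lemma commutator_mem_derived: "x \<in> A \<Longrightarrow> y \<in> A \<Longrightarrow> x \<otimes> y \<otimes> inv x \<otimes> inv y \<in> derived G A"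
  unfolding derived_def by (rule generate.incl) blast

lemma derived_eq_one_iff:
  assumes "A \<subseteq> carrier G"
  shows "derived G A = {\<one>} \<longleftrightarrow> (\<forall>x\<in>A. \<forall>y\<in>A. x \<otimes> y = y \<otimes> x)"
proof
  assume der: "derived G A = {\<one>}"
  show "\<forall>x\<in>A. \<forall>y\<in>A. x \<otimes> y = y \<otimes> x"
  proof (intro ballI)
    fix x y assume "x \<in> A" "y \<in> A"
    then have "x \<otimes> y \<otimes> inv x \<otimes> inv y = \<one>" using commutator_mem_derived der by blast
    then show "x \<otimes> y = y \<otimes> x" using commutator_eq_one_iff assms \<open>x \<in> A\<close> \<open>y \<in> A\<close> by blast
  qed
next
  assume "\<forall>x\<in>A. \<forall>y\<in>A. x \<otimes> y = y \<otimes> x"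
  then have "derived_set G A \<subseteq> {\<one>}" using commutator_eq_one_iff assms by blast
  then have "derived G A \<subseteq> generate G {\<one>}" unfolding derived_def by (rule mono_generate)
  then have "derived G A \<subseteq> {\<one>}" by (simp add: generate_one)
  moreover have "\<one> \<in> derived G A"
    using subgroup.one_closed[OF derived_is_subgroup[OF assms]] .
  ultimately show "derived G A = {\<one>}" by blast
qed

lemma centralizer_subgroup:
  assumes "S \<subseteq> carrier G"
  shows "subgroup (centralizer G S) G"
proof (rule subgroupI)
  show "centralizer G S \<subseteq> carrier G" unfolding centralizer_def by auto
  have "\<one> \<in> centralizer G S" using assms unfolding centralizer_def by auto
  then show "centralizer G S \<noteq> {}" by blast
next
  fix z assume z: "z \<in> centralizer G S"
  have "s \<otimes> inv z = inv z \<otimes> s" if s: "s \<in> S" for s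
  proof -
    have zs: "s \<otimes> z = z \<otimes> s" and carr: "s \<in> carrier G" "z \<in> carrier G"
      using z s assms unfolding centralizer_def by auto
    have "s \<otimes> inv z = inv z \<otimes> (z \<otimes> s) \<otimes> inv z" using carr by (simp add: m_assoc)
    also have "\<dots> = inv z \<otimes> s" using carr by (simp add: zs[symmetric] m_assoc)
    finally show ?thesis .
  qed
  then show "inv z \<in> centralizer G S" using z unfolding centralizer_def by auto
next
  fix z w assume z: "z \<in> centralizer G S" and w: "w \<in> centralizer G S"
  have "s \<otimes> (z \<otimes> w) = z \<otimes> w \<otimes> s" if s: "s \<in> S" for s
  proof -
    have zs: "s \<otimes> z = z \<otimes> s" and ws: "s \<otimes> w = w \<otimes> s" and carr: "s \<in> carrier G" "z \<in> carrier G" "w \<in> carrier G"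
      using z w s assms unfolding centralizer_def by auto
    have "s \<otimes> (z \<otimes> w) = z \<otimes> (s \<otimes> w)" using carr by (simp add: m_assoc[symmetric] zs)
    also have "\<dots> = z \<otimes> w \<otimes> s" using carr by (simp add: ws m_assoc)
    finally show ?thesis .
  qed
  then show "z \<otimes> w \<in> centralizer G S" using z w unfolding centralizer_def by auto
qed

lemma generate_subset_centralizer:
  "S \<subseteq> carrier G \<Longrightarrow> T \<subseteq> centralizer G S \<Longrightarrow> generate G T \<subseteq> centralizer G S"
  using generate_subgroup_incl centralizer_subgroup by blast

lemma commute_generate:
  assumes "x \<in> carrier G" "T \<subseteq> carrier G" "\<And>t. t \<in> T \<Longrightarrow> x \<otimes> t = t \<otimes> x" "z \<in> generate G T"
  shows "x \<otimes> z = z \<otimes> x"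
proof -
  have "T \<subseteq> centralizer G {x}" using assms unfolding centralizer_def by auto
  then have "z \<in> centralizer G {x}" using generate_subset_centralizer[of "{x}" T] assms by auto
  then show ?thesis unfolding centralizer_def by auto
qed

lemma generate_commute:
  assumes T: "T \<subseteq> carrier G" and comm: "\<And>s t. s \<in> T \<Longrightarrow> t \<in> T \<Longrightarrow> s \<otimes> t = t \<otimes> s"
    and u: "u \<in> generate G T" and v: "v \<in> generate G T"
  shows "u \<otimes> v = v \<otimes> u"
proof -
  have uc: "u \<in> carrier G" using u generate_in_carrier[OF T] by blast
  have "u \<otimes> t = t \<otimes> u" if "t \<in> T" for t
    using commute_generate[OF _ T _ u, of t] that T comm by (auto simp: subsetD)
  then show ?thesis using commute_generate[OF uc T _ v] by simp
qed

lemma mem_normalizer_if_commute: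
  assumes g: "g \<in> carrier G" and E: "E \<subseteq> carrier G" and comm: "\<And>h. h \<in> E \<Longrightarrow> g \<otimes> h = h \<otimes> g"
  shows "g \<in> normalizer G E"
proof (rule mem_normalizerI[OF g E])
  fix h assume h: "h \<in> E"
  have hc: "h \<in> carrier G" using h E by auto
  have "g \<otimes> h \<otimes> inv g = h" using g hc by (simp add: comm[OF h] m_assoc)
  moreover have "inv g \<otimes> h \<otimes> g = h" using g hc by (simp add: comm[OF h, symmetric] m_assoc)
  ultimately show "g \<otimes> h \<otimes> inv g \<in> E \<and> inv g \<otimes> h \<otimes> g \<in> E" using h by simp
qed

lemma subset_normalizer_if_derived_subset:
  assumes A: "subgroup A G" and E: "subgroup E G" and "E \<subseteq> A" "derived G A \<subseteq> E"
  shows "A \<subseteq> normalizer G E"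
proof
  have conj: "l \<otimes> h \<otimes> inv l \<in> E" if l: "l \<in> A" and h: "h \<in> E" for l h
  proof -
    have carr: "l \<in> carrier G" "h \<in> carrier G"
      using l h subgroup.subset[OF A] subgroup.subset[OF E] by auto
    have "l \<otimes> h \<otimes> inv l \<otimes> inv h \<in> E" using commutator_mem_derived[OF l, of h] h assms(3,4) by auto
    then have "l \<otimes> h \<otimes> inv l \<otimes> inv h \<otimes> h \<in> E" using subgroup.m_closed[OF E _ h] by blast
    then show ?thesis using carr by (simp add: m_assoc)
  qed
  fix l assume l: "l \<in> A"
  have "inv l \<otimes> h \<otimes> l \<in> E" if "h \<in> E" for h
    using conj[OF subgroup.m_inv_closed[OF A l] that] l subgroup.subset[OF A] by auto
  moreover have "l \<in> carrier G" using l subgroup.subset[OF A] by auto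
  ultimately show "l \<in> normalizer G E"
    using mem_normalizerI[OF _ subgroup.subset[OF E]] conj[OF l] by blast
qed

lemma subgroup_commutator_mem:
  assumes S: "subgroup S G" and b: "b \<in> carrier G"
  shows "subgroup {x \<in> normalizer G S. x \<otimes> b \<otimes> inv x \<otimes> inv b \<in> S} G"
proof -
  have Sc: "S \<subseteq> carrier G" using subgroup.subset[OF S] .
  have N: "subgroup (normalizer G S) G" using normalizer_imp_subgroup[OF Sc] .
  have Nc: "x \<in> carrier G" if "x \<in> normalizer G S" for x
    using that subgroup.subset[OF N] by auto
  show ?thesis
  proof (rule subgroupI)
    show "{x \<in> normalizer G S. x \<otimes> b \<otimes> inv x \<otimes> inv b \<in> S} \<noteq> {}"
      using subgroup.one_closed[OF N] subgroup.one_closed[OF S] b by auto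
  next
    fix x assume "x \<in> {x \<in> normalizer G S. x \<otimes> b \<otimes> inv x \<otimes> inv b \<in> S}"
    then have x: "x \<in> normalizer G S" "x \<otimes> b \<otimes> inv x \<otimes> inv b \<in> S" by auto
    have ix: "inv x \<in> normalizer G S" using subgroup.m_inv_closed[OF N x(1)] .
    have "inv x \<otimes> inv (x \<otimes> b \<otimes> inv x \<otimes> inv b) \<otimes> inv (inv x) \<in> S"
      using conj_mem_normalizer[OF ix Sc] subgroup.m_inv_closed[OF S x(2)] by blast
    also have "inv x \<otimes> inv (x \<otimes> b \<otimes> inv x \<otimes> inv b) \<otimes> inv (inv x) = inv x \<otimes> b \<otimes> inv (inv x) \<otimes> inv b"
      using Nc[OF x(1)] b by (simp add: m_assoc inv_mult_group)
    finally show "inv x \<in> {x \<in> normalizer G S. x \<otimes> b \<otimes> inv x \<otimes> inv b \<in> S}" using ix by simp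
  next
    fix x y
    assume "x \<in> {x \<in> normalizer G S. x \<otimes> b \<otimes> inv x \<otimes> inv b \<in> S}"
      and "y \<in> {x \<in> normalizer G S. x \<otimes> b \<otimes> inv x \<otimes> inv b \<in> S}"
    then have x: "x \<in> normalizer G S" "x \<otimes> b \<otimes> inv x \<otimes> inv b \<in> S"
      and y: "y \<in> normalizer G S" "y \<otimes> b \<otimes> inv y \<otimes> inv b \<in> S" by auto
    have "x \<otimes> (y \<otimes> b \<otimes> inv y \<otimes> inv b) \<otimes> inv x \<otimes> (x \<otimes> b \<otimes> inv x \<otimes> inv b) \<in> S"
      using conj_mem_normalizer[OF x(1) Sc y(2)] x(2) subgroup.m_closed[OF S] by blast
    also have "x \<otimes> (y \<otimes> b \<otimes> inv y \<otimes> inv b) \<otimes> inv x \<otimes> (x \<otimes> b \<otimes> inv x \<otimes> inv b)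
        = x \<otimes> y \<otimes> b \<otimes> inv (x \<otimes> y) \<otimes> inv b"
      using Nc[OF x(1)] Nc[OF y(1)] b by (simp add: m_assoc inv_mult_group)
    finally show "x \<otimes> y \<in> {x \<in> normalizer G S. x \<otimes> b \<otimes> inv x \<otimes> inv b \<in> S}"
      using subgroup.m_closed[OF N x(1) y(1)] by simp
  qed (use Nc in auto)
qed

lemma derived_generate_subset:
  assumes S: "subgroup S G" and A: "A \<subseteq> normalizer G S"
    and comm: "\<And>x y. x \<in> A \<Longrightarrow> y \<in> A \<Longrightarrow> x \<otimes> y \<otimes> inv x \<otimes> inv y \<in> S"
  shows "derived G (generate G A) \<subseteq> S"
proof -
  let ?C = "\<lambda>b. {x \<in> normalizer G S. x \<otimes> b \<otimes> inv x \<otimes> inv b \<in> S}"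
  have Sc: "S \<subseteq> carrier G" using subgroup.subset[OF S] .
  have Ac: "A \<subseteq> carrier G" using A normalizer_imp_subgroup[OF Sc] subgroup.subset by blast
  have inv_comm: "y \<otimes> x \<otimes> inv y \<otimes> inv x \<in> S"
    if "x \<otimes> y \<otimes> inv x \<otimes> inv y \<in> S" "x \<in> carrier G" "y \<in> carrier G" for x y
    using subgroup.m_inv_closed[OF S that(1)] that(2,3) by (simp add: m_assoc inv_mult_group)
  have generators: "generate G A \<subseteq> ?C a" if a: "a \<in> A" for a
  proof (rule generate_subgroup_incl[OF _ subgroup_commutator_mem[OF S]])
    show "a \<in> carrier G" using a Ac by auto
    show "A \<subseteq> ?C a" using A comm a by auto
  qed
  have all: "generate G A \<subseteq> ?C y" if y: "y \<in> generate G A" for y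
  proof (rule generate_subgroup_incl[OF _ subgroup_commutator_mem[OF S]])
    have yc: "y \<in> carrier G" using y generate_in_carrier[OF Ac] by blast
    show "y \<in> carrier G" by fact
    show "A \<subseteq> ?C y"
    proof
      fix x assume x: "x \<in> A"
      have "y \<otimes> x \<otimes> inv y \<otimes> inv x \<in> S" using generators[OF x] y by blast
      then show "x \<in> ?C y" using inv_comm[of y x] x A yc Ac by auto
    qed
  qed
  have "derived_set G (generate G A) \<subseteq> S" using all by blast
  then show ?thesis unfolding derived_def by (rule generate_subgroup_incl[OF _ S])
qed

lemma conjugation_hom: "g \<in> carrier G \<Longrightarrow> (\<lambda>h. g \<otimes> h \<otimes> inv g) \<in> hom G G"
  by (rule homI) (auto simp: m_assoc)

lemma conjugate_int_pow:
  assumes "g \<in> carrier G" "a \<in> carrier G"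
  shows "g \<otimes> a [^] (k::int) \<otimes> inv g = (g \<otimes> a \<otimes> inv g) [^] k"
  using hom_int_pow[OF conjugation_hom[OF assms(1)] assms(2) is_group is_group] by simp

lemma conjugate_generate:
  assumes "g \<in> carrier G" "A \<subseteq> carrier G"
  shows "(\<lambda>h. g \<otimes> h \<otimes> inv g) ` generate G A = generate G ((\<lambda>h. g \<otimes> h \<otimes> inv g) ` A)"
proof -
  interpret group_hom G G "\<lambda>h. g \<otimes> h \<otimes> inv g"
    using conjugation_hom[OF assms(1)] by unfold_locales
  show ?thesis using generate_img[OF assms(2)] by simp
qed

lemma normal_conjugate_image:
  assumes "N \<lhd> G" "g \<in> carrier G"
  shows "(\<lambda>h. g \<otimes> h \<otimes> inv g) ` N = N"
proof -
  have "N \<subseteq> carrier G" using assms(1) normal_imp_subgroup subgroup.subset by blast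
  then show ?thesis using normal_conjugate_eq[OF assms] conjugate_eq_image[OF assms(2)] by simp
qed

lemma conjugate_generate_insert_normal:
  assumes N: "N \<lhd> G" and g: "g \<in> carrier G" and a: "a \<in> carrier G"
  shows "(\<lambda>h. g \<otimes> h \<otimes> inv g) ` generate G (insert a N) = generate G (insert (g \<otimes> a \<otimes> inv g) N)"
proof -
  have "insert a N \<subseteq> carrier G" using a N normal_imp_subgroup subgroup.subset by blast
  then show ?thesis using conjugate_generate[OF g] normal_conjugate_image[OF N g] by simp
qed

lemma mem_normalizer_generate_singleton:
  assumes g: "g \<in> carrier G" and a: "a \<in> carrier G"
    and eq: "generate G {g \<otimes> a \<otimes> inv g} = generate G {a}"
  shows "g \<in> normalizer G (generate G {a})"
proof -
  have sub: "generate G {a} \<subseteq> carrier G" using generate_incl a by blast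
  have "g <# generate G {a} #> inv g = generate G {a}"
    using conjugate_eq_image[OF g sub] conjugate_generate[OF g, of "{a}"] a eq by simp
  then show ?thesis using mem_normalizer_iff[OF sub] g by blast
qed

lemma normal_set_mult_subgroup:
  assumes "N \<lhd> G" "subgroup H G"
  shows "subgroup (N <#> H) G"
proof -
  interpret second_isomorphism_grp N G H
    using assms unfolding second_isomorphism_grp_def second_isomorphism_grp_axioms_def by auto
  show ?thesis by (rule normal_set_mult_subgroup)
qed

lemma generate_insert_normal:
  assumes N: "N \<lhd> G" and a: "a \<in> carrier G"
  shows "generate G (insert a N) = N <#> generate G {a}"
proof
  have Nc: "N \<subseteq> carrier G" using N normal_imp_subgroup subgroup.subset by blast
  have A: "subgroup (generate G {a}) G" using generate_is_subgroup a by blast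
  have "\<one> \<otimes> a \<in> N <#> generate G {a}"
    using subgroup.one_closed[OF normal_imp_subgroup[OF N]] generate.incl[of a "{a}" G]
    unfolding set_mult_def by blast
  then have "a \<in> N <#> generate G {a}" using a by simp
  moreover have "N \<subseteq> N <#> generate G {a}"
  proof
    fix n assume "n \<in> N"
    then have "n \<otimes> \<one> \<in> N <#> generate G {a}"
      using generate.one[of G "{a}"] unfolding set_mult_def by blast
    then show "n \<in> N <#> generate G {a}" using \<open>n \<in> N\<close> Nc by auto
  qed
  ultimately show "generate G (insert a N) \<subseteq> N <#> generate G {a}"
    by (intro generate_subgroup_incl[OF _ normal_set_mult_subgroup[OF N A]]) simp
  show "N <#> generate G {a} \<subseteq> generate G (insert a N)"
  proof
    fix x assume "x \<in> N <#> generate G {a}"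
    then obtain n b where "n \<in> N" "b \<in> generate G {a}" "x = n \<otimes> b"
      unfolding set_mult_def by blast
    moreover have "generate G {a} \<subseteq> generate G (insert a N)" by (rule mono_generate) blast
    ultimately show "x \<in> generate G (insert a N)"
      using generate.eng[OF generate.incl[of n "insert a N"]] by blast
  qed
qed

context
  fixes M :: "'a set" and a :: 'a
  assumes M: "M \<lhd> G" and ab: "\<And>x y. x \<in> M \<Longrightarrow> y \<in> M \<Longrightarrow> x \<otimes> y = y \<otimes> x"
    and a: "a \<in> carrier G"
begin

private lemma M_subgroup: "subgroup M G"
  using M normal_imp_subgroup by blast

private lemma M_carrier: "x \<in> M \<Longrightarrow> x \<in> carrier G"
  using subgroup.subset[OF M_subgroup] by blast

lemma commutator_mult_right:
  assumes x: "x \<in> M" and y: "y \<in> M"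
  shows "a \<otimes> (x \<otimes> y) \<otimes> inv a \<otimes> inv (x \<otimes> y)
    = (a \<otimes> x \<otimes> inv a \<otimes> inv x) \<otimes> (a \<otimes> y \<otimes> inv a \<otimes> inv y)"
proof -
  have v: "a \<otimes> y \<otimes> inv a \<in> M" using normal.inv_op_closed2[OF M a y] .
  have ix: "inv x \<in> M" and iy: "inv y \<in> M" using subgroup.m_inv_closed[OF M_subgroup] x y by auto
  have "a \<otimes> (x \<otimes> y) \<otimes> inv a \<otimes> inv (x \<otimes> y)
      = (a \<otimes> x \<otimes> inv a) \<otimes> (a \<otimes> y \<otimes> inv a) \<otimes> (inv y \<otimes> inv x)"
    using a M_carrier x y by (simp add: m_assoc inv_mult_group)
  also have "\<dots> = (a \<otimes> x \<otimes> inv a) \<otimes> ((a \<otimes> y \<otimes> inv a) \<otimes> inv x) \<otimes> inv y"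
    using ab[OF iy ix] a M_carrier x y by (simp add: m_assoc)
  also have "\<dots> = (a \<otimes> x \<otimes> inv a) \<otimes> (inv x \<otimes> (a \<otimes> y \<otimes> inv a)) \<otimes> inv y"
    using ab[OF v ix] by simp
  also have "\<dots> = (a \<otimes> x \<otimes> inv a \<otimes> inv x) \<otimes> (a \<otimes> y \<otimes> inv a \<otimes> inv y)"
    using a M_carrier x y by (simp add: m_assoc)
  finally show ?thesis .
qed

lemma commutator_inv_right:
  assumes x: "x \<in> M"
  shows "a \<otimes> inv x \<otimes> inv a \<otimes> inv (inv x) = inv (a \<otimes> x \<otimes> inv a \<otimes> inv x)"
proof -
  have u: "inv (a \<otimes> x \<otimes> inv a) \<in> M"
    using subgroup.m_inv_closed[OF M_subgroup normal.inv_op_closed2[OF M a x]] .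
  have "a \<otimes> inv x \<otimes> inv a \<otimes> inv (inv x) = inv (a \<otimes> x \<otimes> inv a) \<otimes> x"
    using a M_carrier x by (simp add: m_assoc inv_mult_group)
  also have "\<dots> = x \<otimes> inv (a \<otimes> x \<otimes> inv a)" using ab[OF u x] .
  also have "\<dots> = inv (a \<otimes> x \<otimes> inv a \<otimes> inv x)" using a M_carrier x by (simp add: m_assoc inv_mult_group)
  finally show ?thesis .
qed

lemma commutator_image_subgroup: "subgroup ((\<lambda>x. a \<otimes> x \<otimes> inv a \<otimes> inv x) ` M) G"
proof (rule subgroupI)
  show "(\<lambda>x. a \<otimes> x \<otimes> inv a \<otimes> inv x) ` M \<subseteq> carrier G" using a M_carrier by auto
  show "(\<lambda>x. a \<otimes> x \<otimes> inv a \<otimes> inv x) ` M \<noteq> {}" using subgroup.one_closed[OF M_subgroup] by auto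
next
  fix z assume "z \<in> (\<lambda>x. a \<otimes> x \<otimes> inv a \<otimes> inv x) ` M"
  then obtain x where x: "x \<in> M" "z = a \<otimes> x \<otimes> inv a \<otimes> inv x" by blast
  then have "inv z = a \<otimes> inv x \<otimes> inv a \<otimes> inv (inv x)" using commutator_inv_right by simp
  moreover have "inv x \<in> M" using subgroup.m_inv_closed[OF M_subgroup x(1)] .
  ultimately show "inv z \<in> (\<lambda>x. a \<otimes> x \<otimes> inv a \<otimes> inv x) ` M" by blast
next
  fix z w
  assume "z \<in> (\<lambda>x. a \<otimes> x \<otimes> inv a \<otimes> inv x) ` M" "w \<in> (\<lambda>x. a \<otimes> x \<otimes> inv a \<otimes> inv x) ` M"
  then obtain x y where xy: "x \<in> M" "y \<in> M" "z = a \<otimes> x \<otimes> inv a \<otimes> inv x" "w = a \<otimes> y \<otimes> inv a \<otimes> inv y"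
    by blast
  then have "z \<otimes> w = a \<otimes> (x \<otimes> y) \<otimes> inv a \<otimes> inv (x \<otimes> y)" using commutator_mult_right by simp
  moreover have "x \<otimes> y \<in> M" using subgroup.m_closed[OF M_subgroup xy(1,2)] .
  ultimately show "z \<otimes> w \<in> (\<lambda>x. a \<otimes> x \<otimes> inv a \<otimes> inv x) ` M" by blast
qed

lemma commutator_image_subset: "(\<lambda>x. a \<otimes> x \<otimes> inv a \<otimes> inv x) ` M \<subseteq> M"
proof
  fix z assume "z \<in> (\<lambda>x. a \<otimes> x \<otimes> inv a \<otimes> inv x) ` M"
  then obtain x where x: "x \<in> M" "z = a \<otimes> x \<otimes> inv a \<otimes> inv x" by blast
  then show "z \<in> M"
    using subgroup.m_closed[OF M_subgroup normal.inv_op_closed2[OF M a x(1)]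
        subgroup.m_inv_closed[OF M_subgroup x(1)]] by simp
qed

lemma insert_subset_normalizer_commutator_image:
  "insert a M \<subseteq> normalizer G ((\<lambda>x. a \<otimes> x \<otimes> inv a \<otimes> inv x) ` M)"
proof
  let ?I = "(\<lambda>x. a \<otimes> x \<otimes> inv a \<otimes> inv x) ` M"
  have I: "?I \<subseteq> carrier G" using subgroup.subset[OF commutator_image_subgroup] .
  fix x assume x: "x \<in> insert a M"
  show "x \<in> normalizer G ?I"
  proof (cases "x = a")
    case True
    show ?thesis unfolding True
    proof (rule mem_normalizerI[OF a I])
      fix h assume "h \<in> ?I"
      then obtain y where y: "y \<in> M" "h = a \<otimes> y \<otimes> inv a \<otimes> inv y" by blast
      have "a \<otimes> h \<otimes> inv a = (\<lambda>x. a \<otimes> x \<otimes> inv a \<otimes> inv x) (a \<otimes> y \<otimes> inv a)"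
        "inv a \<otimes> h \<otimes> a = (\<lambda>x. a \<otimes> x \<otimes> inv a \<otimes> inv x) (inv a \<otimes> y \<otimes> a)"
        unfolding y(2) using a M_carrier[OF y(1)] by (simp_all add: m_assoc inv_mult_group)
      moreover have "a \<otimes> y \<otimes> inv a \<in> M" "inv a \<otimes> y \<otimes> a \<in> M"
        using normal.inv_op_closed1[OF M a y(1)] normal.inv_op_closed2[OF M a y(1)] by auto
      ultimately show "a \<otimes> h \<otimes> inv a \<in> ?I \<and> inv a \<otimes> h \<otimes> a \<in> ?I" by blast
    qed
  next
    case False
    then have xM: "x \<in> M" using x by blast
    show ?thesis
      using mem_normalizer_if_commute[OF M_carrier[OF xM] I] ab[OF xM] commutator_image_subset by blast
  qed
qed

lemma commutator_insert_mem_commutator_image: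
  assumes "x \<in> insert a M" "y \<in> insert a M"
  shows "x \<otimes> y \<otimes> inv x \<otimes> inv y \<in> (\<lambda>x. a \<otimes> x \<otimes> inv a \<otimes> inv x) ` M"
proof -
  note I = commutator_image_subgroup
  consider "x = a" "y = a" | "x = a" "y \<in> M" | "x \<in> M" "y = a" | "x \<in> M" "y \<in> M"
    using assms by blast
  then show ?thesis
  proof cases
    case 1
    then show ?thesis using subgroup.one_closed[OF I] a by (simp add: m_assoc)
  next
    case 2
    then show ?thesis by blast
  next
    case 3
    have "x \<otimes> y \<otimes> inv x \<otimes> inv y = inv (a \<otimes> x \<otimes> inv a \<otimes> inv x)"
      using 3 a M_carrier by (simp add: m_assoc inv_mult_group)
    moreover have "a \<otimes> x \<otimes> inv a \<otimes> inv x \<in> (\<lambda>x. a \<otimes> x \<otimes> inv a \<otimes> inv x) ` M" using 3(1) by blast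
    ultimately show ?thesis using subgroup.m_inv_closed[OF I] by simp
  next
    case 4
    then have "x \<otimes> y \<otimes> inv x \<otimes> inv y = \<one>" using ab commutator_eq_one_iff M_carrier by simp
    then show ?thesis using subgroup.one_closed[OF I] by simp
  qed
qed

text \<open>The commutator map \<open>x \<mapsto> [a, x]\<close> is an endomorphism of \<open>M\<close>; if \<open>M\<close> lies in the derived
  subgroup of \<open>\<langle>a, M\<rangle>\<close>, its image is all of \<open>M\<close>, so it is injective.\<close>
lemma fixed_point_free_if_derived_supset:
  assumes fin: "finite M" and der: "M \<subseteq> derived G (generate G (insert a M))"
    and m: "m \<in> M" "a \<otimes> m = m \<otimes> a"
  shows "m = \<one>"
proof -
  let ?f = "\<lambda>x. a \<otimes> x \<otimes> inv a \<otimes> inv x"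
  have "derived G (generate G (insert a M)) \<subseteq> ?f ` M"
    by (rule derived_generate_subset[OF commutator_image_subgroup insert_subset_normalizer_commutator_image
          commutator_insert_mem_commutator_image])
  then have "?f ` M = M" using der commutator_image_subset by blast
  then have "card (?f ` M) = card M" by simp
  then have "inj_on ?f M" by (rule eq_card_imp_inj_on[OF fin])
  moreover have "?f m = ?f \<one>" using commutator_eq_one_iff[OF a M_carrier[OF m(1)]] m(2) a by simp
  ultimately show ?thesis using m(1) subgroup.one_closed[OF M_subgroup] unfolding inj_on_def by blast
qed

end

lemma coset_conjugate_if_fixed_point_free:
  assumes M: "M \<lhd> G" "finite M" and b: "b \<in> carrier G"
    and fpf: "\<And>m. m \<in> M \<Longrightarrow> b \<otimes> m = m \<otimes> b \<Longrightarrow> m = \<one>"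
    and m0: "m0 \<in> M"
  shows "\<exists>x\<in>M. x \<otimes> b \<otimes> inv x = m0 \<otimes> b"
proof -
  have sM: "subgroup M G" using M(1) normal_imp_subgroup by blast
  define h where "h x = x \<otimes> b \<otimes> inv x \<otimes> inv b" for x
  have Mc: "x \<in> carrier G" if "x \<in> M" for x using that subgroup.subset[OF sM] by auto
  have hM: "h x \<in> M" if x: "x \<in> M" for x
  proof -
    have "x \<otimes> (b \<otimes> inv x \<otimes> inv b) \<in> M"
      using subgroup.m_closed[OF sM x normal.inv_op_closed2[OF M(1) b subgroup.m_inv_closed[OF sM x]]] .
    then show ?thesis unfolding h_def using Mc[OF x] b by (simp add: m_assoc)
  qed
  have "inj_on h M"
  proof (rule inj_onI)
    fix x y assume x: "x \<in> M" and y: "y \<in> M" and "h x = h y"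
    then have "x \<otimes> b \<otimes> inv x = y \<otimes> b \<otimes> inv y" unfolding h_def using Mc b by simp
    then have "inv y \<otimes> (x \<otimes> b \<otimes> inv x) \<otimes> x = inv y \<otimes> (y \<otimes> b \<otimes> inv y) \<otimes> x" by simp
    then have "b \<otimes> (inv y \<otimes> x) = inv y \<otimes> x \<otimes> b" using Mc x y b by (simp add: m_assoc)
    then have "inv y \<otimes> x = \<one>" using fpf subgroup.m_closed[OF sM] subgroup.m_inv_closed[OF sM] x y by blast
    then show "x = y" using Mc x y by (metis inv_closed inv_inv inv_equality)
  qed
  then have "h ` M = M" using hM by (intro card_subset_eq[OF M(2)]) (auto simp: card_image)
  then obtain x where x: "x \<in> M" "h x = m0" using m0 by (metis imageE)
  have "x \<otimes> b \<otimes> inv x = h x \<otimes> b" unfolding h_def using Mc[OF x(1)] b by (simp add: m_assoc)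
  then show ?thesis using x by auto
qed

lemma cyclic_normal_conjugation_is_power:
  assumes M: "M \<lhd> G" "M = generate G {y}" and g: "g \<in> carrier G"
  obtains k :: int where "\<And>m. m \<in> M \<Longrightarrow> g \<otimes> m \<otimes> inv g = m [^] k"
proof -
  have yM: "y \<in> M" using M(2) generate.incl[of y "{y}" G] by blast
  then have y: "y \<in> carrier G" using M(1) normal_imp_subgroup subgroup.subset by blast
  have "g \<otimes> y \<otimes> inv g \<in> M" using normal.inv_op_closed2[OF M(1) g yM] .
  then obtain k :: int where k: "g \<otimes> y \<otimes> inv g = y [^] k" using M(2) generate_pow[OF y] by auto
  have "g \<otimes> m \<otimes> inv g = m [^] k" if "m \<in> M" for m
  proof -
    obtain j :: int where j: "m = y [^] j" using \<open>m \<in> M\<close> M(2) generate_pow[OF y] by auto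
    have "g \<otimes> m \<otimes> inv g = (g \<otimes> y \<otimes> inv g) [^] j" using conjugate_int_pow[OF g y] j by simp
    also have "\<dots> = (y [^] j) [^] k" using k y by (simp add: int_pow_pow mult.commute)
    finally show ?thesis using j by simp
  qed
  then show ?thesis using that by blast
qed

text \<open>Automorphisms of a cyclic group are power maps, so they commute; hence commutators act
  trivially on a cyclic normal subgroup.\<close>
lemma derived_subset_centralizer_if_cyclic_normal:
  assumes M: "M \<lhd> G" "M = generate G {y}"
  shows "derived G (carrier G) \<subseteq> centralizer G M"
proof -
  have sM: "subgroup M G" using M(1) normal_imp_subgroup by blast
  have conj_comm: "g \<otimes> (h \<otimes> w \<otimes> inv h) \<otimes> inv g = h \<otimes> (g \<otimes> w \<otimes> inv g) \<otimes> inv h"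
    if g: "g \<in> carrier G" and h: "h \<in> carrier G" and w: "w \<in> M" for g h w
  proof -
    obtain kg :: int where kg: "\<And>m. m \<in> M \<Longrightarrow> g \<otimes> m \<otimes> inv g = m [^] kg"
      using cyclic_normal_conjugation_is_power[OF M g] by blast
    obtain kh :: int where kh: "\<And>m. m \<in> M \<Longrightarrow> h \<otimes> m \<otimes> inv h = m [^] kh"
      using cyclic_normal_conjugation_is_power[OF M h] by blast
    have wc: "w \<in> carrier G" using w subgroup.subset[OF sM] by auto
    have "g \<otimes> (h \<otimes> w \<otimes> inv h) \<otimes> inv g = (w [^] kh) [^] kg"
      using kg kh w normal.inv_op_closed2[OF M(1) h w] by simp
    also have "\<dots> = (w [^] kg) [^] kh" using wc by (simp add: int_pow_pow mult.commute)
    also have "\<dots> = h \<otimes> (g \<otimes> w \<otimes> inv g) \<otimes> inv h"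
      using kg kh w normal.inv_op_closed2[OF M(1) g w] by simp
    finally show ?thesis .
  qed
  have "derived_set G (carrier G) \<subseteq> centralizer G M"
  proof
    fix c assume "c \<in> derived_set G (carrier G)"
    then obtain g h where gh: "g \<in> carrier G" "h \<in> carrier G" "c = g \<otimes> h \<otimes> inv g \<otimes> inv h" by blast
    have "m \<otimes> c = c \<otimes> m" if m: "m \<in> M" for m
    proof -
      have mc: "m \<in> carrier G" using m subgroup.subset[OF sM] by auto
      define w where "w = inv g \<otimes> (inv h \<otimes> m \<otimes> h) \<otimes> g"
      have wM: "w \<in> M" unfolding w_def using normal.inv_op_closed1[OF M(1)] gh m by simp
      have "c \<otimes> m \<otimes> inv c = g \<otimes> (h \<otimes> w \<otimes> inv h) \<otimes> inv g"
        unfolding w_def gh(3) using gh mc by (simp add: m_assoc inv_mult_group)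
      also have "\<dots> = m" unfolding conj_comm[OF gh(1,2) wM] unfolding w_def using gh mc by (simp add: m_assoc)
      finally have "c \<otimes> m \<otimes> inv c \<otimes> c = m \<otimes> c" by simp
      then show ?thesis using gh mc by (simp add: m_assoc)
    qed
    then show "c \<in> centralizer G M" unfolding centralizer_def using gh by auto
  qed
  then show ?thesis unfolding derived_def using generate_subset_centralizer subgroup.subset[OF sM] by blast
qed

lemma pow_mult_commutator:
  assumes u: "u \<in> carrier G" and v: "v \<in> carrier G" and w: "w \<in> carrier G"
    and vu: "v \<otimes> u = u \<otimes> v \<otimes> w" and wu: "w \<otimes> u = u \<otimes> w" and wv: "w \<otimes> v = v \<otimes> w"
  shows "(u \<otimes> v) [^] (n::nat) = u [^] n \<otimes> v [^] n \<otimes> w [^] (\<Sum>i<n. i)"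
proof -
  have wu': "w [^] k \<otimes> (u \<otimes> z) = u \<otimes> (w [^] k \<otimes> z)" if "z \<in> carrier G" for k :: nat and z
    using group_commutes_pow[OF wu w u, of k] that u w by (simp add: m_assoc[symmetric])
  have wv': "w [^] k \<otimes> (v \<otimes> z) = v \<otimes> (w [^] k \<otimes> z)" if "z \<in> carrier G" for k :: nat and z
    using group_commutes_pow[OF wv w v, of k] that v w by (simp add: m_assoc[symmetric])
  have vu': "v \<otimes> (u \<otimes> z) = u \<otimes> (v \<otimes> (w \<otimes> z))" if "z \<in> carrier G" for z
    using that u v w by (simp add: m_assoc[symmetric] vu)
  have vnu: "v [^] k \<otimes> (u \<otimes> z) = u \<otimes> (v [^] k \<otimes> (w [^] k \<otimes> z))" if "z \<in> carrier G" for k :: nat and z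
    using that
  proof (induct k arbitrary: z)
    case (Suc k)
    then show ?case using u v w by (simp add: m_assoc vu' wv')
  qed (simp add: u)
  show ?thesis
  proof (induct n)
    case (Suc n)
    have "(u \<otimes> v) [^] Suc n = u [^] n \<otimes> (v [^] n \<otimes> (w [^] (\<Sum>i<n. i) \<otimes> (u \<otimes> v)))"
      using Suc u v w by (simp add: m_assoc)
    also have "\<dots> = u [^] Suc n \<otimes> v [^] Suc n \<otimes> (w [^] n \<otimes> w [^] (\<Sum>i<n. i))"
      using u v w by (simp add: m_assoc wu' wv' vnu group_commutes_pow[OF wv w v])
    finally show ?case using w by (simp add: nat_pow_mult add.commute)
  qed simp
qed

section \<open>Element orders\<close>

lemma subgroup_nat_pow_closed: "subgroup H G \<Longrightarrow> x \<in> H \<Longrightarrow> x [^] (n::nat) \<in> H"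
  using subgroup_int_pow_closed[of H x "int n"] by (simp add: int_pow_int)

lemma generate_pow_subset: "x \<in> carrier G \<Longrightarrow> generate G {x [^] (k::nat)} \<subseteq> generate G {x}"
  using generate_subgroup_incl[OF _ generate_is_subgroup]
    subgroup_nat_pow_closed[OF generate_is_subgroup generate.incl[of x "{x}"]] by simp

lemma card_generate_pow_less:
  assumes fin: "finite (carrier G)" and x: "x \<in> carrier G" and k: "k > 1" "k dvd ord x"
  shows "card (generate G {x [^] (k::nat)}) < card (generate G {x})"
proof -
  have "ord x > 0" using ord_ge_1[OF fin x] by simp
  then have "ord x div k < ord x" using div_less_dividend[OF k(1)] by blast
  then show ?thesis using ord_pow[OF x k(2)] k(1) generate_pow_card x by simp
qed

lemma not_mem_generate_pow:
  assumes fin: "finite (carrier G)" and x: "x \<in> carrier G" and k: "k > 1" "k dvd ord x"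
  shows "x \<notin> generate G {x [^] (k::nat)}"
proof
  assume "x \<in> generate G {x [^] k}"
  then have "generate G {x} \<subseteq> generate G {x [^] k}"
    using generate_subgroup_incl[OF _ generate_is_subgroup] x by simp
  then have "card (generate G {x}) \<le> card (generate G {x [^] k})"
    using card_mono[OF finite_subset[OF generate_incl fin]] x by simp
  then show False using card_generate_pow_less[OF fin x k] by simp
qed

lemma ord_dvd_if_mem_generate:
  assumes x: "x \<in> carrier G" and z: "z \<in> generate G {x}"
  shows "ord z dvd ord x"
proof -
  obtain k :: int where k: "z = x [^] k" using z generate_pow[OF x] by auto
  have "z [^] ord x = (x [^] ord x) [^] k"
    using k x by (simp add: int_pow_int[symmetric] int_pow_pow mult.commute)
  then have "z [^] ord x = \<one>" using x by (simp add: pow_ord_eq_1)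
  then show ?thesis using pow_eq_id k x by simp
qed

section \<open>The derived series\<close>

abbreviation derived_series :: "nat \<Rightarrow> 'a set" where
  "derived_series i \<equiv> (derived G ^^ i) (carrier G)"

lemma derived_series_normal: "derived_series i \<lhd> G"
  by (induct i) (auto simp: normal_self derived_is_normal)

lemma derived_series_Suc_subset: "derived_series (Suc i) \<subseteq> derived_series i"
  using derived_incl[OF subset_refl normal_imp_subgroup[OF derived_series_normal]] by simp

lemma derived_series_antimono: "i \<le> j \<Longrightarrow> derived_series j \<subseteq> derived_series i"
proof (induct j rule: dec_induct)
  case (step j)
  then show ?case using derived_series_Suc_subset[of j] by blast
qed simp

lemma derived_series_stationary:
  assumes "derived_series (Suc i) = derived_series i" "i \<le> j"
  shows "derived_series j = derived_series i"
  using assms(2)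
proof (induct j rule: dec_induct)
  case (step j)
  then show ?case using assms(1) by simp
qed simp

lemma derived_series_derived_length:
  assumes "solvable G"
  shows "derived_series (derived_length G) = {\<one>}"
    and "i < derived_length G \<Longrightarrow> derived_series i \<noteq> {\<one>}"
proof -
  have ex: "\<exists>k. derived_series k = {\<one>}" using assms solvable_iff_trivial_derived_seq by simp
  show "derived_series (derived_length G) = {\<one>}"
    unfolding derived_length_def by (rule LeastI_ex[OF ex])
  show "i < derived_length G \<Longrightarrow> derived_series i \<noteq> {\<one>}"
    unfolding derived_length_def by (rule not_less_Least)
qed

lemma derived_series_strict:
  assumes "solvable G" "i < j" "j \<le> derived_length G"
  shows "derived_series j \<subset> derived_series i"
proof -
  have "derived_series (Suc i) \<noteq> derived_series i"
  proof
    assume "derived_series (Suc i) = derived_series i"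
    then have "derived_series (derived_length G) = derived_series i"
      by (rule derived_series_stationary) (use assms(2,3) in simp)
    then have "derived_series i = {\<one>}" using derived_series_derived_length(1)[OF assms(1)] by simp
    moreover have "i < derived_length G" using assms(2,3) by simp
    ultimately show False using derived_series_derived_length(2)[OF assms(1)] by blast
  qed
  then have "derived_series (Suc i) \<subset> derived_series i" using derived_series_Suc_subset[of i] by blast
  moreover have "derived_series j \<subseteq> derived_series (Suc i)"
    by (rule derived_series_antimono) (use assms(2) in simp)
  ultimately show ?thesis by (rule subset_psubset_trans[rotated])
qed

lemma inj_on_derived_series:
  assumes "solvable G"
  shows "inj_on derived_series {..derived_length G}"
proof (rule inj_onI, rule ccontr)
  fix i j assume "i \<in> {..derived_length G}" "j \<in> {..derived_length G}"
    "derived_series i = derived_series j" "i \<noteq> j"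
  then show False
    using derived_series_strict[OF assms, of i j] derived_series_strict[OF assms, of j i]
    by (cases "i < j") auto
qed

lemma derived_series_D_subgroup:
  assumes "solvable G" "0 < i" "i < derived_length G"
  shows "D_subgroup G (derived_series i)"
proof -
  have "derived_series i \<noteq> carrier G" using derived_series_strict[OF assms(1), of 0 i] assms by auto
  moreover have "derived_series i \<noteq> {\<one>}" using derived_series_derived_length(2)[OF assms(1)] assms by simp
  ultimately show ?thesis using normal_D_subgroup derived_series_normal by simp
qed

end

section \<open>The last three terms of the derived series\<close>

text \<open>Models the last nontrivial terms \<open>M = G\<^sup>(\<^sup>d\<^sup>-\<^sup>1\<^sup>)\<close>, \<open>L = G\<^sup>(\<^sup>d\<^sup>-\<^sup>2\<^sup>)\<close>,
  \<open>K = G\<^sup>(\<^sup>d\<^sup>-\<^sup>3\<^sup>)\<close> of the derived series of a finite group of derived length \<open>d \<ge> 3\<close>.\<close>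
locale derived_tail = group G for G (structure) +
  fixes M L K :: "'a set"
  assumes finite_carrier: "finite (carrier G)"
    and M_normal: "M \<lhd> G" and L_normal: "L \<lhd> G" and K_normal: "K \<lhd> G"
    and derived_M: "derived G M = {\<one>}" and derived_L: "derived G L = M" and derived_K: "derived G K = L"
    and M_nontrivial: "M \<noteq> {\<one>}"
    and L_subset_derived: "L \<subseteq> derived G (carrier G)" and L_proper: "L \<noteq> carrier G"
begin

text \<open>The terms of the derived series strictly between \<open>{\<one>}\<close> and \<open>G\<close> are \<open>M\<close>, \<open>L\<close> and
  subgroups containing \<open>K\<close>.\<close>
definition off_series :: "'a set \<Rightarrow> bool" where
  "off_series E \<longleftrightarrow> E \<noteq> M \<and> E \<noteq> L \<and> \<not> K \<subseteq> E"

definition extra_pair :: "'a set \<Rightarrow> 'a set \<Rightarrow> bool" where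
  "extra_pair E1 E2 \<longleftrightarrow> D_subgroup G E1 \<and> D_subgroup G E2 \<and> off_series E1 \<and> off_series E2
     \<and> subgroup_conj_class G E1 \<noteq> subgroup_conj_class G E2"

lemma M_subgroup: "subgroup M G" using M_normal normal_imp_subgroup by blast
lemma L_subgroup: "subgroup L G" using L_normal normal_imp_subgroup by blast
lemma K_subgroup: "subgroup K G" using K_normal normal_imp_subgroup by blast
lemma M_carrier: "x \<in> M \<Longrightarrow> x \<in> carrier G" using subgroup.subset[OF M_subgroup] by blast
lemma L_carrier: "x \<in> L \<Longrightarrow> x \<in> carrier G" using subgroup.subset[OF L_subgroup] by blast
lemma K_carrier: "x \<in> K \<Longrightarrow> x \<in> carrier G" using subgroup.subset[OF K_subgroup] by blast
lemma M_subset_L: "M \<subseteq> L" using derived_incl[OF subset_refl L_subgroup] derived_L by simp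
lemma L_subset_K: "L \<subseteq> K" using derived_incl[OF subset_refl K_subgroup] derived_K by simp
lemma one_in_M: "\<one> \<in> M" using subgroup.one_closed[OF M_subgroup] .
lemma finite_M: "finite M" using finite_subset[OF subgroup.subset[OF M_subgroup] finite_carrier] .

lemma M_neq_L: "M \<noteq> L"
proof
  assume "M = L"
  then have "derived G M = M" using derived_L by simp
  then show False using derived_M M_nontrivial by simp
qed

lemma L_neq_K: "L \<noteq> K"
proof
  assume "L = K"
  then have "M = L" using derived_L derived_K by metis
  then show False using M_neq_L by simp
qed

lemma M_commute: "x \<in> M \<Longrightarrow> y \<in> M \<Longrightarrow> x \<otimes> y = y \<otimes> x"
  using derived_M derived_eq_one_iff[OF subgroup.subset[OF M_subgroup]] by blast

lemma conj_in_M: "g \<in> carrier G \<Longrightarrow> m \<in> M \<Longrightarrow> g \<otimes> m \<otimes> inv g \<in> M"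
  using normal.inv_op_closed2[OF M_normal] .

lemma conj_in_L: "g \<in> carrier G \<Longrightarrow> l \<in> L \<Longrightarrow> g \<otimes> l \<otimes> inv g \<in> L"
  using normal.inv_op_closed2[OF L_normal] .

lemma commutator_L_in_M: "x \<in> L \<Longrightarrow> y \<in> L \<Longrightarrow> x \<otimes> y \<otimes> inv x \<otimes> inv y \<in> M"
  using commutator_mem_derived derived_L by blast

lemma not_L_subset_generate_if_commute:
  assumes "T \<subseteq> carrier G" "\<And>s t. s \<in> T \<Longrightarrow> t \<in> T \<Longrightarrow> s \<otimes> t = t \<otimes> s"
  shows "\<not> L \<subseteq> generate G T"
proof
  assume "L \<subseteq> generate G T"
  then have "\<forall>x\<in>L. \<forall>y\<in>L. x \<otimes> y = y \<otimes> x" using generate_commute[OF assms] by (auto simp: subsetD)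
  then have "derived G L = {\<one>}" using derived_eq_one_iff[OF subgroup.subset[OF L_subgroup]] by simp
  then show False using derived_L M_nontrivial by simp
qed

lemma off_series_if_between: "E \<subseteq> L \<Longrightarrow> E \<noteq> L \<Longrightarrow> E \<noteq> M \<Longrightarrow> off_series E"
  unfolding off_series_def using L_subset_K by blast

lemma off_series_if_not_supset_M: "\<not> M \<subseteq> E \<Longrightarrow> off_series E"
  unfolding off_series_def using M_subset_L L_subset_K by blast

lemma D_subgroup_if_between:
  assumes E: "subgroup E G" "M \<subseteq> E" "E \<subseteq> L" "E \<noteq> L"
  shows "D_subgroup G E"
proof -
  have "L \<subseteq> normalizer G E"
    using subset_normalizer_if_derived_subset[OF L_subgroup E(1,3)] derived_L E(2) by simp
  then have "normalizer G E \<noteq> E" using E(3,4) by blast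
  moreover have "E \<noteq> {\<one>}" using E(2) M_nontrivial one_in_M by blast
  ultimately show ?thesis using E(1) unfolding D_subgroup_def by blast
qed

lemma D_subgroup_if_normalized_by_M:
  assumes E: "subgroup E G" "E \<noteq> {\<one>}" "\<not> M \<subseteq> E"
    and comm: "\<And>m h. m \<in> M \<Longrightarrow> h \<in> E \<Longrightarrow> m \<otimes> h = h \<otimes> m"
  shows "D_subgroup G E"
proof -
  obtain m where m: "m \<in> M" "m \<notin> E" using E(3) by blast
  have "m \<in> normalizer G E"
    using mem_normalizer_if_commute[OF M_carrier[OF m(1)] subgroup.subset[OF E(1)]] comm m(1) by blast
  then show ?thesis using E m(2) unfolding D_subgroup_def by blast
qed

lemma insert_M_subgroup:
  assumes "a \<in> L"
  shows "subgroup (generate G (insert a M)) G" "M \<subseteq> generate G (insert a M)"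
    "a \<in> generate G (insert a M)" "generate G (insert a M) \<subseteq> L"
proof -
  have ins: "insert a M \<subseteq> carrier G" using assms M_carrier L_carrier by blast
  show "subgroup (generate G (insert a M)) G" using generate_is_subgroup[OF ins] .
  show "M \<subseteq> generate G (insert a M)" by (rule subsetI, rule generate.incl) simp
  show "a \<in> generate G (insert a M)" by (rule generate.incl) simp
  show "generate G (insert a M) \<subseteq> L"
    by (rule generate_subgroup_incl[OF _ L_subgroup]) (use assms M_subset_L in auto)
qed

lemma M_nontrivial_element: obtains y where "y \<in> M" "y \<noteq> \<one>"
  using M_nontrivial one_in_M by blast

lemma L_minus_M_element: obtains a where "a \<in> L" "a \<notin> M"
  using M_subset_L M_neq_L by blast

lemma fixed_point_free_if_supplement:
  assumes a: "a \<in> carrier G" and gen: "generate G (insert a M) = L"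
    and m: "m \<in> M" "a \<otimes> m = m \<otimes> a"
  shows "m = \<one>"
  using fixed_point_free_if_derived_supset[OF M_normal M_commute a finite_M _ m] gen derived_L by simp

lemma supplement_meets_M_trivially:
  assumes a: "a \<in> carrier G" and gen: "generate G (insert a M) = L"
    and x: "x \<in> generate G {a}" "x \<in> M"
  shows "x = \<one>"
proof (rule fixed_point_free_if_supplement[OF a gen x(2)])
  show "a \<otimes> x = x \<otimes> a"
    using commute_generate[OF a _ _ x(1)] a by simp
qed

lemma generate_singleton_eq_if_supplement:
  assumes a: "a \<in> carrier G" and gen: "generate G (insert a M) = L"
    and b: "b \<in> generate G {a}" and L: "L \<subseteq> generate G (insert b M)"
  shows "generate G {b} = generate G {a}"
proof -
  have A: "subgroup (generate G {a}) G" using generate_is_subgroup a by simp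
  have bc: "b \<in> carrier G" using b generate_in_carrier a by blast
  have "a \<in> L" using gen generate.incl[of a "insert a M" G] by simp
  then have "a \<in> M <#> generate G {b}" using L generate_insert_normal[OF M_normal bc] by blast
  then obtain m b' where mb: "m \<in> M" "b' \<in> generate G {b}" "a = m \<otimes> b'"
    unfolding set_mult_def by blast
  have B: "generate G {b} \<subseteq> generate G {a}"
    using generate_subgroup_incl[OF _ A] b by simp
  have b'c: "b' \<in> carrier G" using mb(2) generate_in_carrier bc by blast
  have aA: "a \<in> generate G {a}" by (rule generate.incl) simp
  have "m = a \<otimes> inv b'" using mb M_carrier b'c by (simp add: m_assoc)
  moreover have "a \<otimes> inv b' \<in> generate G {a}"
    using subgroup.m_closed[OF A aA subgroup.m_inv_closed[OF A]] mb(2) B by blast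
  ultimately have "m = \<one>" using supplement_meets_M_trivially[OF a gen _ mb(1)] by simp
  then have "a \<in> generate G {b}" using mb b'c by simp
  then have "generate G {a} \<subseteq> generate G {b}"
    using generate_subgroup_incl[OF _ generate_is_subgroup] bc by simp
  then show ?thesis using B by blast
qed

text \<open>A Frattini argument: every conjugate of the supplement \<open>\<langle>a\<rangle>\<close> of \<open>M\<close> in \<open>L\<close> is already
  conjugate to it by an element of \<open>M\<close>, because \<open>a\<close> acts fixed-point-freely on \<open>M\<close>.\<close>
lemma supplement_frattini:
  assumes a: "a \<in> carrier G" and gen: "generate G (insert a M) = L" and g: "g \<in> carrier G"
  shows "\<exists>x\<in>M. inv x \<otimes> g \<in> normalizer G (generate G {a})"
proof -
  let ?c = "\<lambda>h. g \<otimes> h \<otimes> inv g"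
  have aL: "a \<in> L" using gen generate.incl[of a "insert a M" G] by simp
  have L_conj: "L = generate G (insert (?c a) M)"
    using normal_conjugate_image[OF L_normal g] conjugate_generate_insert_normal[OF M_normal g a] gen
    by simp
  have "?c a \<in> M <#> generate G {a}"
    using conj_in_L[OF g aL] gen generate_insert_normal[OF M_normal a] by simp
  then obtain m0 b where mb: "m0 \<in> M" "b \<in> generate G {a}" "?c a = m0 \<otimes> b"
    unfolding set_mult_def by blast
  have bc: "b \<in> carrier G" using mb(2) generate_in_carrier a by blast
  have insb: "insert b M \<subseteq> carrier G" using bc M_carrier by blast
  have "M \<subseteq> generate G (insert b M)" by (rule subsetI, rule generate.incl) simp
  moreover have "m0 \<otimes> b \<in> generate G (insert b M)"
    by (rule generate.eng; rule generate.incl) (simp_all add: mb(1))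
  ultimately have "insert (?c a) M \<subseteq> generate G (insert b M)" using mb(3) by simp
  then have "L \<subseteq> generate G (insert b M)"
    unfolding L_conj by (rule generate_subgroup_incl[OF _ generate_is_subgroup[OF insb]])
  then have ab: "generate G {b} = generate G {a}"
    using generate_singleton_eq_if_supplement[OF a gen mb(2)] by simp
  have "m = \<one>" if "m \<in> M" "b \<otimes> m = m \<otimes> b" for m
  proof (rule fixed_point_free_if_supplement[OF a gen that(1)])
    have "a \<in> generate G {b}" using ab generate.incl[of a "{a}" G] by simp
    then show "a \<otimes> m = m \<otimes> a"
      using commute_generate[OF M_carrier[OF that(1)] _ _, of "{b}" a] bc that by auto
  qed
  then obtain x where x: "x \<in> M" "x \<otimes> b \<otimes> inv x = m0 \<otimes> b"
    using coset_conjugate_if_fixed_point_free[OF M_normal finite_M bc _ mb(1)] by blast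
  define n where "n = inv x \<otimes> g"
  have xc: "x \<in> carrier G" using M_carrier x(1) .
  have nc: "n \<in> carrier G" unfolding n_def using xc g by simp
  have "n \<otimes> a \<otimes> inv n = inv x \<otimes> (?c a) \<otimes> x"
    unfolding n_def using xc g a by (simp add: m_assoc inv_mult_group)
  also have "\<dots> = b" using mb(3) x(2)[symmetric] xc bc by (simp add: m_assoc)
  finally have "generate G {n \<otimes> a \<otimes> inv n} = generate G {a}" using ab by simp
  then show ?thesis using mem_normalizer_generate_singleton[OF nc a] x(1) unfolding n_def by blast
qed

lemma supplement_D_subgroup:
  assumes a: "a \<in> carrier G" and gen: "generate G (insert a M) = L"
  shows "D_subgroup G (generate G {a})" "\<not> M \<subseteq> generate G {a}"
proof -
  let ?A = "generate G {a}"
  show nM: "\<not> M \<subseteq> ?A"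
  proof
    assume "M \<subseteq> ?A"
    then have "M \<subseteq> {\<one>}" using supplement_meets_M_trivially[OF a gen] by blast
    then show False using M_nontrivial one_in_M by blast
  qed
  have "a \<in> L" using gen generate.incl[of a "insert a M" G] by simp
  then have AL: "?A \<subseteq> L" using generate_subgroup_incl[OF _ L_subgroup] by simp
  obtain g where g: "g \<in> carrier G" "g \<notin> L" using L_proper subgroup.subset[OF L_subgroup] by blast
  obtain x where x: "x \<in> M" "inv x \<otimes> g \<in> normalizer G ?A"
    using supplement_frattini[OF a gen g(1)] by blast
  have "inv x \<otimes> g \<notin> L"
  proof
    assume "inv x \<otimes> g \<in> L"
    then have "x \<otimes> (inv x \<otimes> g) \<in> L"
      using subgroup.m_closed[OF L_subgroup] M_subset_L x(1) by blast
    then show False using g M_carrier[OF x(1)] by simp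
  qed
  moreover have "a \<notin> M"
  proof
    assume "a \<in> M"
    then have "L \<subseteq> M" using gen generate_subgroup_incl[OF _ M_subgroup, of "insert a M"] by simp
    then show False using M_subset_L M_neq_L by blast
  qed
  then have "a \<noteq> \<one>" using one_in_M by blast
  moreover have "a \<in> ?A" by (rule generate.incl) simp
  ultimately show "D_subgroup G ?A"
    using D_subgroupI[OF _ _ _ x(2)] generate_is_subgroup a AL by blast
qed

lemma cyclic_in_M_D_subgroup:
  assumes y: "y \<in> M" "y \<noteq> \<one>" and ne: "M \<noteq> generate G {y}"
  shows "D_subgroup G (generate G {y})" "off_series (generate G {y})" "generate G {y} \<subseteq> M"
proof -
  let ?Y = "generate G {y}"
  show YM: "?Y \<subseteq> M" using generate_subgroup_incl[OF _ M_subgroup] y(1) by simp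
  have Y: "subgroup ?Y G" using generate_is_subgroup M_carrier[OF y(1)] by simp
  have yY: "y \<in> ?Y" by (rule generate.incl) simp
  have nM: "\<not> M \<subseteq> ?Y" using YM ne by blast
  show "off_series ?Y" using off_series_if_not_supset_M[OF nM] .
  show "D_subgroup G ?Y"
    using D_subgroup_if_normalized_by_M[OF Y _ nM] M_commute YM y(2) yY by blast
qed

lemma extra_pair_if_not_cyclic:
  assumes not_cyclic: "\<And>y. y \<in> M \<Longrightarrow> M \<noteq> generate G {y}"
  shows "\<exists>E1 E2. extra_pair E1 E2"
proof -
  obtain y where y: "y \<in> M" "y \<noteq> \<one>" by (rule M_nontrivial_element)
  let ?E1 = "generate G {y}"
  note E1 = cyclic_in_M_D_subgroup[OF y not_cyclic[OF y(1)]]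
  obtain a where a: "a \<in> L" "a \<notin> M" by (rule L_minus_M_element)
  have ac: "a \<in> carrier G" using L_carrier a(1) .
  note A = insert_M_subgroup[OF a(1)]
  show ?thesis
  proof (cases "generate G (insert a M) = L")
    case True
    note E2 = supplement_D_subgroup[OF ac True]
    have "a \<in> generate G {a}" by (rule generate.incl) simp
    then have "\<not> generate G {a} \<subseteq> M" using a(2) by blast
    then have "subgroup_conj_class G ?E1 \<noteq> subgroup_conj_class G (generate G {a})"
      using subgroup_conj_class_neq_normal_subset[OF M_normal E1(3)] generate_incl[of "{a}"] ac by simp
    then show ?thesis
      unfolding extra_pair_def using E1(1,2) E2 off_series_if_not_supset_M by blast
  next
    case False
    let ?E2 = "generate G (insert a M)"
    have "D_subgroup G ?E2" using D_subgroup_if_between[OF A(1,2,4) False] .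
    moreover have "off_series ?E2" using off_series_if_between[OF A(4) False] A(3) a(2) by blast
    moreover have "subgroup_conj_class G ?E2 \<noteq> subgroup_conj_class G ?E1"
      using subgroup_conj_class_neq_normal_supset[OF M_normal A(2)] E1(3) not_cyclic[OF y(1)]
        subgroup.subset[OF A(1)] M_carrier by blast
    ultimately show ?thesis unfolding extra_pair_def using E1(1,2) by metis
  qed
qed

lemma L_centralizes_M_if_cyclic: "M = generate G {y} \<Longrightarrow> L \<subseteq> centralizer G M"
  using derived_subset_centralizer_if_cyclic_normal[OF M_normal] L_subset_derived by blast

lemma generate_insert_M_neq_L:
  assumes cent: "L \<subseteq> centralizer G M" and a: "a \<in> L"
  shows "generate G (insert a M) \<noteq> L"
proof -
  have am: "a \<otimes> m = m \<otimes> a" if "m \<in> M" for m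
  proof -
    have "m \<otimes> a = a \<otimes> m" using cent a that unfolding centralizer_def by blast
    then show ?thesis by simp
  qed
  have comm: "s \<otimes> t = t \<otimes> s" if st: "s \<in> insert a M" "t \<in> insert a M" for s t
  proof -
    consider "s = a" "t = a" | "s = a" "t \<in> M" | "s \<in> M" "t = a" | "s \<in> M" "t \<in> M"
      using st by blast
    then show ?thesis using am M_commute by cases auto
  qed
  have "insert a M \<subseteq> carrier G" using a L_carrier M_carrier by blast
  then have "\<not> L \<subseteq> generate G (insert a M)" using not_L_subset_generate_if_commute comm by blast
  then show ?thesis by blast
qed

lemma extra_pair_with_cyclic_avoiding_M:
  assumes E: "D_subgroup G E" "off_series E" "M \<subseteq> E" "E \<subseteq> carrier G"
    and c: "c \<in> carrier G" "c \<noteq> \<one>" "\<not> M \<subseteq> generate G {c}"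
    and comm: "\<And>m. m \<in> M \<Longrightarrow> m \<otimes> c = c \<otimes> m"
  shows "\<exists>E1 E2. extra_pair E1 E2"
proof -
  let ?C = "generate G {c}"
  have cC: "c \<in> ?C" by (rule generate.incl) simp
  have "D_subgroup G ?C"
  proof (rule D_subgroup_if_normalized_by_M)
    show "subgroup ?C G" using generate_is_subgroup c(1) by simp
    show "?C \<noteq> {\<one>}" using cC c(2) by blast
    show "\<not> M \<subseteq> ?C" by fact
    show "m \<otimes> h = h \<otimes> m" if "m \<in> M" "h \<in> ?C" for m h
      using commute_generate[OF M_carrier[OF that(1)] _ _ that(2)] c(1) comm[OF that(1)] by simp
  qed
  moreover have "subgroup_conj_class G E \<noteq> subgroup_conj_class G ?C"
    using subgroup_conj_class_neq_normal_supset[OF M_normal E(3) c(3) E(4)] generate_incl c(1) by simp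
  ultimately show ?thesis
    unfolding extra_pair_def using E(1,2) off_series_if_not_supset_M[OF c(3)] by blast
qed

lemma extra_pair_if_cyclic_avoiding_M:
  assumes cent: "L \<subseteq> centralizer G M" and c: "c \<in> L" "c \<noteq> \<one>" "\<not> M \<subseteq> generate G {c}"
  shows "\<exists>E1 E2. extra_pair E1 E2"
proof -
  obtain a where a: "a \<in> L" "a \<notin> M" by (rule L_minus_M_element)
  note A = insert_M_subgroup[OF a(1)]
  have ne: "generate G (insert a M) \<noteq> L" using generate_insert_M_neq_L[OF cent a(1)] .
  show ?thesis
  proof (rule extra_pair_with_cyclic_avoiding_M[OF _ _ A(2) subgroup.subset[OF A(1)] L_carrier[OF c(1)] c(2,3)])
    show "D_subgroup G (generate G (insert a M))" using D_subgroup_if_between[OF A(1,2,4) ne] .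
    show "off_series (generate G (insert a M))" using off_series_if_between[OF A(4) ne] A(3) a(2) by blast
    show "m \<otimes> c = c \<otimes> m" if "m \<in> M" for m using cent c(1) that unfolding centralizer_def by blast
  qed
qed

end

text \<open>The remaining case: \<open>M\<close> is cyclic and contained in every nontrivial cyclic subgroup of \<open>L\<close>.\<close>
locale derived_tail_cyclic_core = derived_tail +
  fixes y
  assumes M_generated: "M = generate G {y}"
    and M_subset_cyclic: "\<And>c. c \<in> L \<Longrightarrow> c \<noteq> \<one> \<Longrightarrow> M \<subseteq> generate G {c}"
begin

lemma y_in_M: "y \<in> M"
  using M_generated generate.incl[of y "{y}" G] by simp

lemma y_carrier: "y \<in> carrier G"
  using M_carrier[OF y_in_M] .

lemma L_centralizes_M: "L \<subseteq> centralizer G M"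
  using L_centralizes_M_if_cyclic[OF M_generated] .

lemma M_commute_L: "x \<in> L \<Longrightarrow> m \<in> M \<Longrightarrow> m \<otimes> x = x \<otimes> m"
  using L_centralizes_M unfolding centralizer_def by blast

lemma finite_generate: "x \<in> carrier G \<Longrightarrow> finite (generate G {x})"
  using finite_subset[OF generate_incl finite_carrier] by simp

lemma card_generate: "x \<in> carrier G \<Longrightarrow> card (generate G {x}) = ord x"
  using generate_pow_card by simp

lemma card_M: "card M = ord y"
  using card_generate[OF y_carrier] M_generated by simp

lemma prime_card_M: "prime (card M)"
proof -
  let ?p = "card M"
  obtain m where m: "m \<in> M" "m \<noteq> \<one>" by (rule M_nontrivial_element)
  have "{\<one>, m} \<subseteq> M" using m one_in_M by blast
  then have "card {\<one>, m} \<le> ?p" using card_mono[OF finite_M] by blast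
  then have p2: "?p \<ge> 2" using m by simp
  have "u = 1 \<or> u = ?p" if u: "u dvd ?p" for u
  proof (rule ccontr)
    assume nu: "\<not> (u = 1 \<or> u = ?p)"
    have u0: "u > 0" using u p2 by (cases u) auto
    have u1: "u > 1" using u0 nu by simp
    have up: "u < ?p" using dvd_imp_le[OF u] p2 nu by simp
    have yuc: "y [^] u \<in> carrier G" using y_carrier by simp
    have "y [^] u \<noteq> \<one>"
    proof
      assume "y [^] u = \<one>"
      then have "?p dvd u" using pow_eq_id[OF y_carrier] card_M by simp
      then show False using up u0 by (simp add: nat_dvd_not_less)
    qed
    moreover have "y [^] u \<in> L"
      using subgroup_nat_pow_closed[OF M_subgroup y_in_M] M_subset_L by blast
    ultimately have "M \<subseteq> generate G {y [^] u}" using M_subset_cyclic by blast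
    then have "?p \<le> card (generate G {y [^] u})" using card_mono[OF finite_generate[OF yuc]] by blast
    also have "\<dots> = ?p div u" using card_generate[OF yuc] ord_pow[OF y_carrier] u u0 card_M by simp
    also have "\<dots> < ?p" using div_less_dividend[OF u1] p2 by simp
    finally show False by simp
  qed
  then show ?thesis using p2 by (simp add: prime_nat_iff)
qed

lemma M_subset_generate: "x \<in> L \<Longrightarrow> x \<notin> M \<Longrightarrow> M \<subseteq> generate G {x}"
  using M_subset_cyclic[of x] one_in_M by metis

lemma card_M_dvd_ord:
  assumes "x \<in> carrier G" "M \<subseteq> generate G {x}"
  shows "card M dvd ord x"
proof -
  have "y \<in> generate G {x}" using assms(2) y_in_M by blast
  then show ?thesis using ord_dvd_if_mem_generate[OF assms(1)] card_M by simp
qed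

lemma generate_singleton_neq_L:
  assumes "x \<in> L"
  shows "generate G {x} \<noteq> L"
proof -
  have "\<not> L \<subseteq> generate G {x}"
    by (rule not_L_subset_generate_if_commute) (use L_carrier[OF assms] in auto)
  then show ?thesis by blast
qed

lemma pow_card_M:
  assumes x: "x \<in> L" "x \<notin> M"
  shows "x [^] card M \<in> L" "x [^] card M \<noteq> \<one>" "M \<subseteq> generate G {x [^] card M}"
proof -
  have xc: "x \<in> carrier G" using L_carrier x(1) .
  have Mx: "M \<subseteq> generate G {x}" using M_subset_generate[OF x] .
  show xpL: "x [^] card M \<in> L" using subgroup_nat_pow_closed[OF L_subgroup x(1)] .
  show np: "x [^] card M \<noteq> \<one>"
  proof
    assume "x [^] card M = \<one>"
    then have "ord x dvd card M" using pow_eq_id[OF xc] by simp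
    then have "ord x = card M" using card_M_dvd_ord[OF xc Mx] by (simp add: dvd_antisym)
    then have "generate G {x} = M"
      using card_subset_eq[OF finite_generate[OF xc] Mx] card_generate[OF xc] by simp
    moreover have "x \<in> generate G {x}" by (rule generate.incl) simp
    ultimately show False using x(2) by simp
  qed
  show "M \<subseteq> generate G {x [^] card M}" using M_subset_cyclic[OF xpL np] .
qed

lemma cyclic_above_M:
  assumes x: "x \<in> L" "x \<notin> M"
  shows "D_subgroup G (generate G {x})" "off_series (generate G {x})" "M \<subseteq> generate G {x}"
    "generate G {x} \<subseteq> L" "generate G {x} \<noteq> L"
proof -
  have X: "subgroup (generate G {x}) G" using generate_is_subgroup L_carrier x(1) by simp
  have xX: "x \<in> generate G {x}" by (rule generate.incl) simp
  show Mx: "M \<subseteq> generate G {x}" using M_subset_generate[OF x] .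
  show XL: "generate G {x} \<subseteq> L" using generate_subgroup_incl[OF _ L_subgroup] x(1) by simp
  show XneL: "generate G {x} \<noteq> L" using generate_singleton_neq_L[OF x(1)] .
  show "D_subgroup G (generate G {x})" using D_subgroup_if_between[OF X Mx XL XneL] .
  show "off_series (generate G {x})" using off_series_if_between[OF XL XneL] xX x(2) by blast
qed

lemma extra_pair_if_power_neq_M:
  assumes x: "x \<in> L" "x \<notin> M" and ne: "generate G {x [^] card M} \<noteq> M"
  shows "\<exists>E1 E2. extra_pair E1 E2"
proof -
  let ?X = "generate G {x}"
  let ?Y = "generate G {x [^] card M}"
  note X = cyclic_above_M[OF x]
  have xc: "x \<in> carrier G" using L_carrier x(1) .
  have Y: "subgroup ?Y G" using generate_is_subgroup xc by simp
  have YX: "?Y \<subseteq> ?X" using generate_pow_subset[OF xc] .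
  have "card ?Y < card ?X"
    using card_generate_pow_less[OF finite_carrier xc prime_gt_1_nat[OF prime_card_M]]
      card_M_dvd_ord[OF xc X(3)] by blast
  then have "subgroup_conj_class G ?X \<noteq> subgroup_conj_class G ?Y"
    using subgroup_conj_class_neq_card generate_incl xc by simp
  moreover have "D_subgroup G ?Y" "off_series ?Y"
    using D_subgroup_if_between[OF Y pow_card_M(3)[OF x]] off_series_if_between[of ?Y] YX X(4,5) ne
    by blast+
  ultimately show ?thesis unfolding extra_pair_def using X(1,2) by blast
qed

text \<open>For odd \<open>p\<close> the commutator correction in \<open>(a\<^sup>-\<^sup>k b)\<^sup>p\<close> is a \<open>p(p - 1)/2\<close>-th power of an
  element of \<open>M\<close>, hence trivial.\<close>
lemma pow_card_M_adjusted:
  assumes odd: "odd (card M)" and a: "a \<in> L" and b: "b \<in> L"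
    and k: "b [^] card M = (a [^] card M) [^] (k::int)"
  shows "(a [^] (- k) \<otimes> b) [^] card M = \<one>"
proof -
  let ?p = "card M"
  define u where "u = a [^] (- k)"
  obtain q where q: "?p = 2 * q + 1" using odd by (metis oddE)
  have ac: "a \<in> carrier G" and bc: "b \<in> carrier G" using L_carrier a b by auto
  have uc: "u \<in> carrier G" unfolding u_def using ac by simp
  have uL: "u \<in> L" unfolding u_def using subgroup_int_pow_closed[OF L_subgroup a] .
  define w where "w = inv b \<otimes> inv u \<otimes> b \<otimes> u"
  have wM: "w \<in> M"
    using commutator_L_in_M[of "inv b" "inv u"] subgroup.m_inv_closed[OF L_subgroup] b uL bc uc
    unfolding w_def by simp
  have wc: "w \<in> carrier G" using M_carrier wM .
  have "(u \<otimes> b) [^] ?p = u [^] ?p \<otimes> b [^] ?p \<otimes> w [^] (\<Sum>i<?p. i)"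
  proof (rule pow_mult_commutator[OF uc bc wc])
    show "b \<otimes> u = u \<otimes> b \<otimes> w" unfolding w_def using uc bc by (simp add: m_assoc)
    show "w \<otimes> u = u \<otimes> w" "w \<otimes> b = b \<otimes> w" using M_commute_L wM uL b by auto
  qed
  also have "u [^] ?p \<otimes> b [^] ?p = \<one>"
    unfolding u_def k using ac by (simp add: int_pow_int[symmetric] int_pow_pow int_pow_mult[symmetric])
  also have "w [^] (\<Sum>i<?p. i) = (w [^] ?p) [^] q"
  proof -
    have "(\<Sum>i<?p. i) = (\<Sum>i\<le>2 * q. i)" using q by (simp add: lessThan_Suc_atMost[symmetric])
    also have "\<dots> = ?p * q" using gauss_sum_nat[of "2 * q"] q by (simp add: atLeast0AtMost mult.assoc)
    finally show ?thesis using wc by (simp add: nat_pow_pow)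
  qed
  also have "w [^] ?p = \<one>"
    using pow_eq_id[OF wc] ord_dvd_if_mem_generate[OF y_carrier] wM M_generated card_M by simp
  finally show ?thesis unfolding u_def using wc by simp
qed

lemma card_M_eq_two_if_powers_eq_M:
  assumes powers: "\<And>x. x \<in> L \<Longrightarrow> x \<notin> M \<Longrightarrow> generate G {x [^] card M} = M"
  shows "card M = 2"
proof (rule ccontr)
  let ?p = "card M"
  assume "?p \<noteq> 2"
  then have odd: "odd ?p" using prime_card_M prime_odd_nat prime_ge_2_nat le_neq_implies_less by metis
  obtain a where a: "a \<in> L" "a \<notin> M" by (rule L_minus_M_element)
  have ac: "a \<in> carrier G" using L_carrier a(1) .
  let ?A = "generate G {a}"
  have A: "subgroup ?A G" using generate_is_subgroup ac by simp
  have aA: "a \<in> ?A" by (rule generate.incl) simp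
  obtain b where b: "b \<in> L" "b \<notin> ?A"
    using generate_subgroup_incl[OF _ L_subgroup] a(1) generate_singleton_neq_L[OF a(1)] by blast
  have bM: "b \<notin> M" using b M_subset_generate[OF a] by blast
  have bc: "b \<in> carrier G" using L_carrier b(1) .
  have "b [^] ?p \<in> generate G {a [^] ?p}"
    using powers[OF a] powers[OF b(1) bM] generate.incl[of "b [^] ?p" "{b [^] ?p}" G] by simp
  then obtain k :: int where k: "b [^] ?p = (a [^] ?p) [^] k" using generate_pow ac by auto
  let ?u = "a [^] (- k)"
  have uA: "?u \<in> ?A" using subgroup_int_pow_closed[OF A aA] .
  have "?u \<otimes> b \<in> L" using subgroup.m_closed[OF L_subgroup subgroup_int_pow_closed[OF L_subgroup a(1)] b(1)] .
  moreover have "?u \<otimes> b \<notin> M"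
  proof
    assume "?u \<otimes> b \<in> M"
    then have "inv ?u \<otimes> (?u \<otimes> b) \<in> ?A"
      using M_subset_generate[OF a] subgroup.m_closed[OF A subgroup.m_inv_closed[OF A uA]] by blast
    then show False using b(2) ac bc by simp
  qed
  ultimately show False using pow_card_M(2) pow_card_M_adjusted[OF odd a(1) b(1) k] by blast
qed

lemma central_if_card_two:
  assumes two: "card M = 2" and g: "g \<in> carrier G" and m: "m \<in> M"
  shows "g \<otimes> m = m \<otimes> g"
proof (cases "m = \<one>")
  case True
  then show ?thesis using g by simp
next
  case False
  have "{\<one>, m} \<subseteq> M" using m one_in_M by blast
  moreover have "card {\<one>, m} = card M" using False two by simp
  ultimately have M: "M = {\<one>, m}" using card_subset_eq[OF finite_M] by blast
  have mc: "m \<in> carrier G" using M_carrier m .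
  have "g \<otimes> m \<otimes> inv g \<noteq> \<one>"
  proof
    assume "g \<otimes> m \<otimes> inv g = \<one>"
    then have "inv g \<otimes> (g \<otimes> m \<otimes> inv g) \<otimes> g = \<one>" using g by simp
    then show False using False g mc by (simp add: m_assoc)
  qed
  then have "g \<otimes> m \<otimes> inv g = m" using conj_in_M[OF g m] M by blast
  then have "g \<otimes> m \<otimes> inv g \<otimes> g = m \<otimes> g" by simp
  then show ?thesis using g mc by (simp add: m_assoc)
qed

lemma central_left_commute_if_card_two:
  assumes "card M = 2" "m \<in> M" "x \<in> carrier G" "z \<in> carrier G"
  shows "x \<otimes> (m \<otimes> z) = m \<otimes> (x \<otimes> z)"
  using central_if_card_two[OF assms(1,3,2)] assms M_carrier by (simp add: m_assoc[symmetric])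

lemma commutator_twice_in_M:
  assumes two: "card M = 2"
    and sq: "\<And>l. l \<in> L \<Longrightarrow> l \<otimes> l \<in> M"
    and g: "g \<in> carrier G" "g \<otimes> g \<in> L" and l: "l \<in> L"
  shows "g \<otimes> (g \<otimes> l \<otimes> inv g \<otimes> inv l) \<otimes> inv g \<otimes> inv (g \<otimes> l \<otimes> inv g \<otimes> inv l) \<in> M"
proof -
  have lc: "l \<in> carrier G" using L_carrier l .
  define s where "s = g \<otimes> l \<otimes> inv g"
  have sL: "s \<in> L" unfolding s_def using conj_in_L[OF g(1) l] .
  have sc: "s \<in> carrier G" using L_carrier sL .
  define w1 where "w1 = (g \<otimes> g) \<otimes> l \<otimes> inv (g \<otimes> g) \<otimes> inv l"
  define w2 where "w2 = inv s \<otimes> l \<otimes> inv (inv s) \<otimes> inv l"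
  have w1M: "w1 \<in> M" unfolding w1_def using commutator_L_in_M[OF g(2) l] .
  have w2M: "w2 \<in> M" unfolding w2_def
    using commutator_L_in_M[OF subgroup.m_inv_closed[OF L_subgroup sL] l] .
  have w1c: "w1 \<in> carrier G" and w2c: "w2 \<in> carrier G" using w1M w2M M_carrier by auto
  have "g \<otimes> (g \<otimes> l \<otimes> inv g \<otimes> inv l) \<otimes> inv g \<otimes> inv (g \<otimes> l \<otimes> inv g \<otimes> inv l)
      = (g \<otimes> s \<otimes> inv g) \<otimes> inv s \<otimes> l \<otimes> inv s"
    unfolding s_def using g lc by (simp add: m_assoc inv_mult_group)
  also have "g \<otimes> s \<otimes> inv g = w1 \<otimes> l"
    unfolding w1_def s_def using g lc by (simp add: m_assoc inv_mult_group)
  also have "w1 \<otimes> l \<otimes> inv s \<otimes> l \<otimes> inv s = w1 \<otimes> l \<otimes> (inv s \<otimes> l) \<otimes> inv s"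
    using w1c lc sc by (simp add: m_assoc)
  also have "inv s \<otimes> l = w2 \<otimes> l \<otimes> inv s" unfolding w2_def using sc lc by (simp add: m_assoc)
  also have "w1 \<otimes> l \<otimes> (w2 \<otimes> l \<otimes> inv s) \<otimes> inv s = w1 \<otimes> w2 \<otimes> (l \<otimes> l) \<otimes> (inv s \<otimes> inv s)"
    using central_left_commute_if_card_two[OF two w2M lc] w1c w2c lc sc by (simp add: m_assoc)
  finally have eq: "g \<otimes> (g \<otimes> l \<otimes> inv g \<otimes> inv l) \<otimes> inv g \<otimes> inv (g \<otimes> l \<otimes> inv g \<otimes> inv l)
      = w1 \<otimes> w2 \<otimes> (l \<otimes> l) \<otimes> (inv s \<otimes> inv s)" .
  have "inv s \<otimes> inv s \<in> M"
    using subgroup.m_inv_closed[OF M_subgroup sq[OF sL]] sc by (simp add: inv_mult_group)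
  then show ?thesis unfolding eq
    using w1M w2M sq[OF l] subgroup.m_closed[OF M_subgroup] by blast
qed

lemma subgroup_commutator_in_M:
  assumes two: "card M = 2" and g: "g \<in> carrier G"
  shows "subgroup {x \<in> L. g \<otimes> x \<otimes> inv g \<otimes> inv x \<in> M} G"
proof (rule subgroupI)
  show "{x \<in> L. g \<otimes> x \<otimes> inv g \<otimes> inv x \<in> M} \<subseteq> carrier G" using L_carrier by blast
  have "\<one> \<in> {x \<in> L. g \<otimes> x \<otimes> inv g \<otimes> inv x \<in> M}"
    using subgroup.one_closed[OF L_subgroup] one_in_M g by simp
  then show "{x \<in> L. g \<otimes> x \<otimes> inv g \<otimes> inv x \<in> M} \<noteq> {}" by blast
next
  fix x assume "x \<in> {x \<in> L. g \<otimes> x \<otimes> inv g \<otimes> inv x \<in> M}"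
  then have x: "x \<in> L" "g \<otimes> x \<otimes> inv g \<otimes> inv x \<in> M" by auto
  have xc: "x \<in> carrier G" using L_carrier x(1) .
  have "inv (g \<otimes> x \<otimes> inv g) \<otimes> inv (g \<otimes> x \<otimes> inv g \<otimes> inv x) \<otimes> inv (inv (g \<otimes> x \<otimes> inv g)) \<in> M"
    using conj_in_M[of "inv (g \<otimes> x \<otimes> inv g)"] subgroup.m_inv_closed[OF M_subgroup x(2)] g xc by simp
  moreover have "inv (g \<otimes> x \<otimes> inv g) \<otimes> inv (g \<otimes> x \<otimes> inv g \<otimes> inv x) \<otimes> inv (inv (g \<otimes> x \<otimes> inv g))
      = g \<otimes> inv x \<otimes> inv g \<otimes> inv (inv x)"
    using g xc by (simp add: m_assoc inv_mult_group)
  ultimately show "inv x \<in> {x \<in> L. g \<otimes> x \<otimes> inv g \<otimes> inv x \<in> M}"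
    using subgroup.m_inv_closed[OF L_subgroup x(1)] by simp
next
  fix x z
  assume "x \<in> {x \<in> L. g \<otimes> x \<otimes> inv g \<otimes> inv x \<in> M}" "z \<in> {x \<in> L. g \<otimes> x \<otimes> inv g \<otimes> inv x \<in> M}"
  then have x: "x \<in> L" "g \<otimes> x \<otimes> inv g \<otimes> inv x \<in> M" and z: "z \<in> L" "g \<otimes> z \<otimes> inv g \<otimes> inv z \<in> M"
    by auto
  have xc: "x \<in> carrier G" and zc: "z \<in> carrier G" using L_carrier x(1) z(1) by auto
  have "g \<otimes> (x \<otimes> z) \<otimes> inv g \<otimes> inv (x \<otimes> z) = (g \<otimes> x \<otimes> inv g) \<otimes> (g \<otimes> z \<otimes> inv g \<otimes> inv z) \<otimes> inv x"
    using g xc zc by (simp add: m_assoc inv_mult_group)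
  also have "\<dots> = (g \<otimes> z \<otimes> inv g \<otimes> inv z) \<otimes> (g \<otimes> x \<otimes> inv g \<otimes> inv x)"
    using central_left_commute_if_card_two[OF two z(2), of "g \<otimes> x \<otimes> inv g"] g xc zc
    by (simp add: m_assoc)
  finally show "x \<otimes> z \<in> {x \<in> L. g \<otimes> x \<otimes> inv g \<otimes> inv x \<in> M}"
    using subgroup.m_closed[OF M_subgroup z(2) x(2)] subgroup.m_closed[OF L_subgroup x(1) z(1)] by simp
qed

lemma conj_commutator_in_M:
  assumes two: "card M = 2" and g: "g \<in> carrier G"
    and l: "l \<in> L" and s: "s \<in> L" "g \<otimes> s \<otimes> inv g \<otimes> inv s \<in> M"
  shows "g \<otimes> (l \<otimes> s \<otimes> inv l) \<otimes> inv g \<otimes> inv (l \<otimes> s \<otimes> inv l) \<in> M"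
proof -
  have lc: "l \<in> carrier G" and sc: "s \<in> carrier G" using L_carrier l s(1) by auto
  define t where "t = g \<otimes> l \<otimes> inv g"
  have tL: "t \<in> L" unfolding t_def using conj_in_L[OF g l] .
  have tc: "t \<in> carrier G" using L_carrier tL .
  define c where "c = g \<otimes> s \<otimes> inv g \<otimes> inv s"
  define c1 where "c1 = t \<otimes> s \<otimes> inv t \<otimes> inv s"
  define c2 where "c2 = l \<otimes> inv s \<otimes> inv l \<otimes> inv (inv s)"
  have cM: "c \<in> M" unfolding c_def using s(2) .
  have c1M: "c1 \<in> M" unfolding c1_def using commutator_L_in_M[OF tL s(1)] .
  have c2M: "c2 \<in> M" unfolding c2_def
    using commutator_L_in_M[OF l subgroup.m_inv_closed[OF L_subgroup s(1)]] .
  have carr: "c \<in> carrier G" "c1 \<in> carrier G" "c2 \<in> carrier G" using cM c1M c2M M_carrier by auto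
  have "g \<otimes> (l \<otimes> s \<otimes> inv l) \<otimes> inv g \<otimes> inv (l \<otimes> s \<otimes> inv l) = t \<otimes> (c \<otimes> s) \<otimes> inv t \<otimes> (l \<otimes> inv s \<otimes> inv l)"
    unfolding t_def c_def using g lc sc by (simp add: m_assoc inv_mult_group)
  also have "t \<otimes> (c \<otimes> s) \<otimes> inv t = c \<otimes> (c1 \<otimes> s)"
    unfolding c1_def using central_left_commute_if_card_two[OF two cM tc sc] tc sc carr by (simp add: m_assoc)
  also have "l \<otimes> inv s \<otimes> inv l = c2 \<otimes> inv s" unfolding c2_def using lc sc by (simp add: m_assoc)
  also have "c \<otimes> (c1 \<otimes> s) \<otimes> (c2 \<otimes> inv s) = c \<otimes> c1 \<otimes> c2"
    using central_left_commute_if_card_two[OF two c2M sc] sc carr by (simp add: m_assoc)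
  finally show ?thesis using subgroup.m_closed[OF M_subgroup] cM c1M c2M by simp
qed

lemma commutator_insert_in:
  assumes S: "subgroup S G" "M \<subseteq> S" and g: "g \<in> carrier G"
    and gl: "\<And>l. l \<in> L \<Longrightarrow> g \<otimes> l \<otimes> inv g \<otimes> inv l \<in> S"
    and xz: "x \<in> insert g L" "z \<in> insert g L"
  shows "x \<otimes> z \<otimes> inv x \<otimes> inv z \<in> S"
proof -
  consider "x = g" "z = g" | "x = g" "z \<in> L" | "x \<in> L" "z = g" | "x \<in> L" "z \<in> L"
    using xz by blast
  then show ?thesis
  proof cases
    case 1
    then show ?thesis using subgroup.one_closed[OF S(1)] g by (simp add: m_assoc)
  next
    case 2
    then show ?thesis using gl by simp
  next
    case 3
    have "inv (g \<otimes> x \<otimes> inv g \<otimes> inv x) = x \<otimes> g \<otimes> inv x \<otimes> inv g"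
      using 3(1) g L_carrier by (simp add: m_assoc inv_mult_group)
    then show ?thesis using subgroup.m_inv_closed[OF S(1) gl[OF 3(1)]] 3(2) by simp
  next
    case 4
    then show ?thesis using commutator_L_in_M S(2) by blast
  qed
qed

lemma insert_subset_normalizer_commutator_kernel:
  assumes two: "card M = 2" and g: "g \<in> carrier G"
  shows "insert g L \<subseteq> normalizer G {x \<in> L. g \<otimes> x \<otimes> inv g \<otimes> inv x \<in> M}"
proof
  let ?S = "{x \<in> L. g \<otimes> x \<otimes> inv g \<otimes> inv x \<in> M}"
  have S: "subgroup ?S G" using subgroup_commutator_in_M[OF two g] .
  fix x assume x: "x \<in> insert g L"
  have xc: "x \<in> carrier G" using x g L_carrier by blast
  show "x \<in> normalizer G ?S"
  proof (rule mem_normalizerI[OF xc subgroup.subset[OF S]])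
    fix s assume s: "s \<in> ?S"
    show "x \<otimes> s \<otimes> inv x \<in> ?S \<and> inv x \<otimes> s \<otimes> x \<in> ?S"
    proof (cases "x = g")
      case True
      have "g \<otimes> (g \<otimes> s \<otimes> inv g \<otimes> inv s) \<otimes> inv g \<in> M" "inv g \<otimes> (g \<otimes> s \<otimes> inv g \<otimes> inv s) \<otimes> g \<in> M"
        using conj_in_M[OF g] normal.inv_op_closed1[OF M_normal g] s by auto
      then show ?thesis
        using True s g L_carrier conj_in_L[OF g] normal.inv_op_closed1[OF L_normal g]
        by (auto simp: m_assoc inv_mult_group)
    next
      case False
      then have xL: "x \<in> L" using x by blast
      have "inv x \<otimes> s \<otimes> inv (inv x) \<in> ?S"
        using conj_commutator_in_M[OF two g subgroup.m_inv_closed[OF L_subgroup xL]] s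
          conj_in_L[OF inv_closed[OF xc]] by simp
      then show ?thesis
        using conj_commutator_in_M[OF two g xL] s conj_in_L[OF xc] xc by simp
    qed
  qed
qed

text \<open>If \<open>K = \<langle>g, L\<rangle>\<close>, then \<open>K' = L\<close> lies in the kernel of \<open>l \<mapsto> [g, l]\<close> modulo \<open>M\<close>, because that
  kernel contains all commutators of the generators; but then \<open>K' \<subseteq> M\<close>.\<close>
lemma K_neq_generate_insert_if_square_in_L:
  assumes two: "card M = 2"
    and sq: "\<And>l. l \<in> L \<Longrightarrow> l \<otimes> l \<in> M"
    and g: "g \<in> carrier G" "g \<otimes> g \<in> L"
  shows "K \<noteq> generate G (insert g L)"
proof
  assume K: "K = generate G (insert g L)"
  let ?S = "{x \<in> L. g \<otimes> x \<otimes> inv g \<otimes> inv x \<in> M}"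
  have S: "subgroup ?S G" using subgroup_commutator_in_M[OF two g(1)] .
  have "x \<otimes> z \<otimes> inv x \<otimes> inv z \<in> ?S" if "x \<in> insert g L" "z \<in> insert g L" for x z
  proof (rule commutator_insert_in[OF S _ g(1) _ that])
    show "M \<subseteq> ?S"
      using M_subset_L subgroup.m_closed[OF M_subgroup conj_in_M[OF g(1)] subgroup.m_inv_closed[OF M_subgroup]]
      by blast
    show "g \<otimes> l \<otimes> inv g \<otimes> inv l \<in> ?S" if "l \<in> L" for l
      using commutator_twice_in_M[OF two sq g that] conj_in_L[OF g(1) that]
        subgroup.m_closed[OF L_subgroup _ subgroup.m_inv_closed[OF L_subgroup that]] by blast
  qed
  then have "L \<subseteq> ?S"
    using derived_generate_subset[OF S insert_subset_normalizer_commutator_kernel[OF two g(1)]] K derived_K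
    by blast
  moreover have "insert g L \<subseteq> normalizer G M"
    using carrier_subset_normalizer_if_normal[OF M_normal] g(1) L_carrier by blast
  ultimately have "derived G K \<subseteq> M"
    unfolding K using derived_generate_subset[OF M_subgroup] commutator_insert_in[OF M_subgroup _ g(1)]
    by blast
  then have "L \<subseteq> M" using derived_K by simp
  then show False using M_subset_L M_neq_L by blast
qed

lemma square_in_M_if_powers_eq_M:
  assumes two: "card M = 2" and powers: "\<And>x. x \<in> L \<Longrightarrow> x \<notin> M \<Longrightarrow> generate G {x [^] card M} = M"
    and l: "l \<in> L"
  shows "l \<otimes> l \<in> M"
proof (cases "l \<in> M")
  case True
  then show ?thesis using subgroup.m_closed[OF M_subgroup] by blast
next
  case False
  have "l [^] card M \<in> generate G {l [^] card M}" by (rule generate.incl) simp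
  then show ?thesis using powers[OF l False] two L_carrier[OF l] by (simp add: numeral_2_eq_2)
qed

lemma extra_pair_with_square_outside_L:
  assumes two: "card M = 2" and E: "D_subgroup G E" "off_series E" "E \<subseteq> L"
    and g: "g \<in> carrier G" "g \<otimes> g \<notin> L" "M \<subseteq> generate G {g}"
  shows "\<exists>E1 E2. extra_pair E1 E2"
proof -
  let ?S = "generate G {g [^] (2::nat)}"
  have sq: "g [^] (2::nat) = g \<otimes> g" using g(1) by (simp add: numeral_2_eq_2)
  have gS: "g [^] (2::nat) \<in> ?S" by (rule generate.incl) simp
  have g2L: "g [^] (2::nat) \<notin> L" using sq g(2) by simp
  have S: "subgroup ?S G" using generate_is_subgroup g(1) by simp
  have gg: "g \<in> generate G {g}" by (rule generate.incl) simp
  have "g \<notin> ?S"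
    using not_mem_generate_pow[OF finite_carrier g(1), of 2] card_M_dvd_ord[OF g(1,3)] two by simp
  moreover have "g \<in> normalizer G ?S"
  proof (rule mem_normalizer_if_commute[OF g(1) subgroup.subset[OF S]])
    show "g \<otimes> h = h \<otimes> g" if "h \<in> ?S" for h
      using generate_commute[of "{g}" g h] g(1) generate_pow_subset[OF g(1)] that gg by auto
  qed
  moreover have "g [^] (2::nat) \<noteq> \<one>"
  proof
    assume "g [^] (2::nat) = \<one>"
    then show False using g2L subgroup.one_closed[OF L_subgroup] by simp
  qed
  ultimately have "D_subgroup G ?S" using D_subgroupI[OF S gS] by blast
  moreover have "off_series ?S"
  proof -
    have "\<not> L \<subseteq> ?S" by (rule not_L_subset_generate_if_commute) (use g(1) in auto)
    then have "\<not> K \<subseteq> ?S" using L_subset_K by blast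
    moreover have "?S \<noteq> M" "?S \<noteq> L" using gS g2L M_subset_L by blast+
    ultimately show ?thesis unfolding off_series_def by blast
  qed
  moreover have "subgroup_conj_class G E \<noteq> subgroup_conj_class G ?S"
    using subgroup_conj_class_neq_normal_subset[OF L_normal E(3)] gS g2L subgroup.subset[OF S] by blast
  ultimately show ?thesis unfolding extra_pair_def using E(1,2) by blast
qed

lemma extra_pair_with_generate_insert_L:
  assumes E: "D_subgroup G E" "off_series E" "E \<subseteq> L"
    and g: "g \<in> K" "g \<notin> L" and ne: "generate G (insert g L) \<noteq> K"
  shows "\<exists>E1 E2. extra_pair E1 E2"
proof -
  let ?H = "generate G (insert g L)"
  have ins: "insert g L \<subseteq> carrier G" using g(1) K_carrier L_carrier by blast
  have H: "subgroup ?H G" using generate_is_subgroup[OF ins] .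
  have gH: "g \<in> ?H" by (rule generate.incl) simp
  have LH: "L \<subseteq> ?H" by (rule subsetI, rule generate.incl) simp
  have HK: "?H \<subseteq> K" using generate_subgroup_incl[OF _ K_subgroup] g(1) L_subset_K by simp
  have "K \<subseteq> normalizer G ?H"
    using subset_normalizer_if_derived_subset[OF K_subgroup H HK] derived_K LH by simp
  then have "normalizer G ?H \<noteq> ?H" using HK ne by blast
  moreover have "g \<noteq> \<one>" using g(2) subgroup.one_closed[OF L_subgroup] by blast
  then have "?H \<noteq> {\<one>}" using gH by blast
  ultimately have "D_subgroup G ?H" using H unfolding D_subgroup_def by blast
  moreover have "off_series ?H" unfolding off_series_def using gH g(2) M_subset_L HK ne by blast
  moreover have "subgroup_conj_class G E \<noteq> subgroup_conj_class G ?H"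
    using subgroup_conj_class_neq_normal_subset[OF L_normal E(3)] gH g(2) subgroup.subset[OF H] by blast
  ultimately show ?thesis unfolding extra_pair_def using E(1,2) by blast
qed

lemma extra_pair_if_card_two:
  assumes two: "card M = 2" and sq: "\<And>l. l \<in> L \<Longrightarrow> l \<otimes> l \<in> M"
  shows "\<exists>E1 E2. extra_pair E1 E2"
proof -
  obtain a where a: "a \<in> L" "a \<notin> M" by (rule L_minus_M_element)
  note E = cyclic_above_M[OF a]
  show ?thesis
  proof (cases "\<exists>c\<in>carrier G. c \<noteq> \<one> \<and> \<not> M \<subseteq> generate G {c}")
    case True
    then obtain c where c: "c \<in> carrier G" "c \<noteq> \<one>" "\<not> M \<subseteq> generate G {c}" by blast
    show ?thesis
    proof (rule extra_pair_with_cyclic_avoiding_M[OF E(1-3) _ c])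
      show "generate G {a} \<subseteq> carrier G" using E(4) subgroup.subset[OF L_subgroup] by blast
      show "m \<otimes> c = c \<otimes> m" if "m \<in> M" for m using central_if_card_two[OF two c(1) that] by simp
    qed
  next
    case False
    obtain g where g: "g \<in> K" "g \<notin> L" using L_subset_K L_neq_K by blast
    have gc: "g \<in> carrier G" using K_carrier g(1) .
    have "g \<noteq> \<one>" using g(2) subgroup.one_closed[OF L_subgroup] by blast
    then have Mg: "M \<subseteq> generate G {g}" using False gc by blast
    show ?thesis
    proof (cases "g \<otimes> g \<in> L")
      case True
      then have "generate G (insert g L) \<noteq> K"
        using K_neq_generate_insert_if_square_in_L[OF two sq gc] by blast
      then show ?thesis using extra_pair_with_generate_insert_L[OF E(1,2,4) g] by blast
    next
      case False
      then show ?thesis using extra_pair_with_square_outside_L[OF two E(1,2,4) gc _ Mg] by blast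
    qed
  qed
qed

lemma extra_pair_exists_cyclic_core: "\<exists>E1 E2. extra_pair E1 E2"
proof (cases "\<exists>x\<in>L. x \<notin> M \<and> generate G {x [^] card M} \<noteq> M")
  case True
  then show ?thesis using extra_pair_if_power_neq_M by blast
next
  case False
  then have powers: "\<And>x. x \<in> L \<Longrightarrow> x \<notin> M \<Longrightarrow> generate G {x [^] card M} = M" by blast
  have two: "card M = 2" using card_M_eq_two_if_powers_eq_M[OF powers] .
  show ?thesis using extra_pair_if_card_two[OF two square_in_M_if_powers_eq_M[OF two powers]] .
qed

end

context derived_tail begin

theorem extra_pair_exists: "\<exists>E1 E2. extra_pair E1 E2"
proof (cases "\<exists>y\<in>M. M = generate G {y}")
  case False
  then show ?thesis using extra_pair_if_not_cyclic by blast
next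
  case True
  then obtain y where y: "M = generate G {y}" by blast
  have cent: "L \<subseteq> centralizer G M" using L_centralizes_M_if_cyclic[OF y] .
  show ?thesis
  proof (cases "\<exists>c\<in>L. c \<noteq> \<one> \<and> \<not> M \<subseteq> generate G {c}")
    case True
    then show ?thesis using extra_pair_if_cyclic_avoiding_M[OF cent] by blast
  next
    case False
    interpret derived_tail_cyclic_core G M L K y
      using y False by unfold_locales blast+
    show ?thesis using extra_pair_exists_cyclic_core .
  qed
qed

end

section \<open>The bound on the derived length\<close>

context group begin

lemma derived_tail_of_derived_series:
  assumes fin: "finite (carrier G)" and solv: "solvable G" and d3: "derived_length G \<ge> 3"
  shows "derived_tail G (derived_series (derived_length G - 1)) (derived_series (derived_length G - 2))
    (derived_series (derived_length G - 3))"
proof -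
  let ?d = "derived_length G"
  have Suc: "Suc (?d - 1) = ?d" "Suc (?d - 2) = ?d - 1" "Suc (?d - 3) = ?d - 2" using d3 by auto
  have L1: "derived_series (?d - 2) \<subseteq> derived G (carrier G)"
    using derived_series_antimono[of 1 "?d - 2"] d3 by simp
  have G1: "derived G (carrier G) \<subset> carrier G" using derived_series_strict[OF solv, of 0 1] d3 by simp
  show ?thesis
  proof (rule derived_tail.intro[OF is_group], rule derived_tail_axioms.intro)
    show "finite (carrier G)" by fact
    show "derived_series (?d - 1) \<lhd> G" "derived_series (?d - 2) \<lhd> G" "derived_series (?d - 3) \<lhd> G"
      by (rule derived_series_normal)+
    show "derived G (derived_series (?d - 1)) = {\<one>}"
      using derived_series_derived_length(1)[OF solv] funpow.simps(2)[of "?d - 1" "derived G"] Suc(1)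
      by simp
    show "derived G (derived_series (?d - 2)) = derived_series (?d - 1)"
      using funpow.simps(2)[of "?d - 2" "derived G"] Suc(2) by (metis comp_apply)
    show "derived G (derived_series (?d - 3)) = derived_series (?d - 2)"
      using funpow.simps(2)[of "?d - 3" "derived G"] Suc(3) by (metis comp_apply)
    show "derived_series (?d - 1) \<noteq> {\<one>}" using derived_series_derived_length(2)[OF solv] d3 by simp
    show "derived_series (?d - 2) \<subseteq> derived G (carrier G)" by (rule L1)
    show "derived_series (?d - 2) \<noteq> carrier G" using L1 G1 by blast
  qed
qed

lemma derived_length_plus_one_le_D_count:
  assumes fin: "finite (carrier G)" and solv: "solvable G" and d3: "derived_length G \<ge> 3"
  shows "derived_length G + 1 \<le> D_count G"
proof -
  let ?d = "derived_length G"
  let ?\<N> = "derived_series ` {1..<?d}"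
  interpret derived_tail G "derived_series (?d - 1)" "derived_series (?d - 2)" "derived_series (?d - 3)"
    using derived_tail_of_derived_series[OF assms] .
  obtain E1 E2 where E: "extra_pair E1 E2" using extra_pair_exists by blast
  have "inj_on derived_series {1..<?d}"
    using inj_on_derived_series[OF solv] by (rule inj_on_subset) auto
  then have card: "card ?\<N> = ?d - 1" by (simp add: card_image)
  have normal: "N \<lhd> G \<and> D_subgroup G N" if "N \<in> ?\<N>" for N
    using that derived_series_normal derived_series_D_subgroup[OF solv] by auto
  have off: "E \<notin> ?\<N>" if E: "off_series E" for E
  proof
    assume "E \<in> ?\<N>"
    then obtain i where i: "1 \<le> i" "i < ?d" "E = derived_series i" by auto
    consider "i = ?d - 1 \<or> i = ?d - 2" | "i \<le> ?d - 3" using i by linarith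
    then show False
    proof cases
      case 1
      then show False using E i(3) unfolding off_series_def by blast
    next
      case 2
      then have "derived_series (?d - 3) \<subseteq> E" using derived_series_antimono i(3) by simp
      then show False using E unfolding off_series_def by blast
    qed
  qed
  have E': "D_subgroup G E1" "D_subgroup G E2" "off_series E1" "off_series E2"
    "subgroup_conj_class G E1 \<noteq> subgroup_conj_class G E2"
    using E unfolding extra_pair_def by blast+
  have "card ?\<N> + 2 \<le> D_count G"
    using card_normal_plus_two_le_D_count[OF fin _ normal E'(1,2) off[OF E'(3)] off[OF E'(4)] E'(5)]
    by blast
  then show ?thesis using card d3 by simp
qed

end

theorem mainTheorem17:
  fixes G :: "('a, 'b) monoid_scheme" and n :: nat
  assumes "group G" and "finite (carrier G)" and "solvable G"
    and "D_count G = n" and "n \<ge> 3"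
  shows "derived_length G \<le> n - 1"
proof -
  interpret group G by fact
  show ?thesis
  proof (cases "derived_length G \<ge> 3")
    case True
    then show ?thesis using derived_length_plus_one_le_D_count[OF assms(2,3)] assms(4) by simp
  next
    case False
    then show ?thesis using assms(5) by simp
  qed
qed

end
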